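(* Let $G$ be a finite group, $H$ a nontrivial core-free subgroup, $\Omega=G/H$, $n=|G:H|$ and $\chi$ the permutation character of $G$ on $\Omega$. For a positive integer $t$ let $$Q(G,t)=\sum_{i=1}^k|x_i^G|\left(\frac{\chi(x_i)}{n}\right)^t,$$ where $x_1,\dots,x_k$ represent the conjugacy classes of elements of prime order in $G$. If $Q(G,t)<1$ then $d_G(H)\leqslant 2t-1$; in particular, if $Q(G,2)<1$ then $d_G(H)=3$.
   Context: Depth: for a finite group $G$, a subgroup $H$ and $m\geqslant 1$, let $(\mathbb{C}G)^{\otimes m}=\mathbb{C}G\otimes_{\mathbb{C}H}\cdots\otimes_{\mathbb{C}H}\mathbb{C}G$ ($m$ factors). For $n\geqslant 1$, the inclusion $\mathbb{C}H\subseteq\mathbb{C}G$ has depth $2n$ if $(\mathbb{C}G)^{\otimes(n+1)}$ is isomorphic, as a $(\mathbb{C}G,\mathbb{C}H)$-bimodule, to a direct summand of $\bigoplus_{i=1}^k(\mathbb{C}G)^{\otimes n}$ for some $k\geqslant 1$; it has depth $2n+1$ if the same holds for $(\mathbb{C}H,\mathbb{C}H)$-bimodules; it has depth $1$ if $\mathbb{C}G$ is isomorphic as a $(\mathbb{C}H,\mathbb{C}H)$-bimodule to a direct summand of $\bigoplus_{i=1}^k\mathbb{C}H$ for some $k\geqslant1$. The depth $d_G(H)$ is the least positive integer $n$ such that the inclusion has depth $n$. $H$ is core-free if $\bigcap_{g\in G}H^g=1$. *)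

theory Defs
  imports "HOL-Algebra.Multiplicative_Group" "HOL-Computational_Algebra.Primes" Complex_Main
begin

text \<open>For a group G and subgroup H, the m-fold tensor product
  CG (x)_CH ... (x)_CH CG has as C-basis the classes of m-tuples
  (g_1,...,g_m) of elements of G modulo the relation
  (g_1,...,g_m) ~ (g_1 h_1, h_1^-1 g_2 h_2, ..., h_(m-1)^-1 g_m), h_i in H
  (pure tensors g_1 (x) ... (x) g_m).\<close>

definition tuples :: "('a, 'b) monoid_scheme \<Rightarrow> nat \<Rightarrow> 'a list set" where
  "tuples G m = {xs. length xs = m \<and> set xs \<subseteq> carrier G}"

definition bal :: "('a, 'b) monoid_scheme \<Rightarrow> 'a set \<Rightarrow> 'a list \<Rightarrow> 'a list \<Rightarrow> bool" where
  "bal G H xs ys \<longleftrightarrow> length ys = length xs \<and>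
     (\<exists>hs. length hs = length xs - 1 \<and> set hs \<subseteq> H \<and>
        (let c = (\<lambda>j. if 0 < j \<and> j < length xs then hs ! (j - 1) else \<one>\<^bsub>G\<^esub>)
         in ys = map (\<lambda>i. inv\<^bsub>G\<^esub> (c i) \<otimes>\<^bsub>G\<^esub> xs ! i \<otimes>\<^bsub>G\<^esub> c (Suc i)) [0..<length xs]))"

definition balrel :: "('a, 'b) monoid_scheme \<Rightarrow> 'a set \<Rightarrow> 'a list set \<Rightarrow> ('a list \<times> 'a list) set" where
  "balrel G H X = {(xs, ys). xs \<in> X \<and> ys \<in> X \<and> bal G H xs ys}"

definition lmul :: "('a, 'b) monoid_scheme \<Rightarrow> 'a \<Rightarrow> 'a list \<Rightarrow> 'a list" where
  "lmul G g xs = (g \<otimes>\<^bsub>G\<^esub> hd xs) # tl xs"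

definition rmul :: "('a, 'b) monoid_scheme \<Rightarrow> 'a list \<Rightarrow> 'a \<Rightarrow> 'a list" where
  "rmul G xs h = butlast xs @ [last xs \<otimes>\<^bsub>G\<^esub> h]"

text \<open>A C-linear map C[X/~] -> C[Y/~] is given by a matrix M ys xs that is constant on
  classes.  It is a bimodule homomorphism for the (CL, CR)-bimodule structures
  (L, R subgroups acting on the left / right) iff the matrix is invariant under
  the simultaneous actions (linearity reduces commuting with CL and CR to commuting
  with the group elements of L and R).\<close>
definition well_def_mat ::
  "('a, 'b) monoid_scheme \<Rightarrow> 'a set \<Rightarrow> 'a list set \<Rightarrow> 'a list set \<Rightarrow> ('a list \<Rightarrow> 'a list \<Rightarrow> complex) \<Rightarrow> bool" where
  "well_def_mat G H Y X M \<longleftrightarrow>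
     (\<forall>ys\<in>Y. \<forall>ys'\<in>Y. \<forall>xs\<in>X. \<forall>xs'\<in>X. bal G H ys ys' \<and> bal G H xs xs' \<longrightarrow> M ys xs = M ys' xs')"

definition equiv_mat ::
  "('a, 'b) monoid_scheme \<Rightarrow> 'a set \<Rightarrow> 'a set \<Rightarrow> 'a list set \<Rightarrow> 'a list set \<Rightarrow> ('a list \<Rightarrow> 'a list \<Rightarrow> complex) \<Rightarrow> bool" where
  "equiv_mat G L R Y X M \<longleftrightarrow>
     (\<forall>a\<in>L. \<forall>b\<in>R. \<forall>ys\<in>Y. \<forall>xs\<in>X.
        M (rmul G (lmul G a ys) b) (rmul G (lmul G a xs) b) = M ys xs)"

text \<open>C[X/~] is isomorphic, as (CL,CR)-bimodule, to a direct summand of the direct sum of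
  k copies of C[Y/~]: there are bimodule maps iota : C[X/~] -> (C[Y/~])^k and
  pi : (C[Y/~])^k -> C[X/~] with pi o iota = id.\<close>
definition bimod_summand ::
  "('a, 'b) monoid_scheme \<Rightarrow> 'a set \<Rightarrow> 'a set \<Rightarrow> 'a set \<Rightarrow> 'a list set \<Rightarrow> 'a list set \<Rightarrow> bool" where
  "bimod_summand G H L R X Y \<longleftrightarrow>
     (\<exists>k::nat. k \<ge> 1 \<and>
       (\<exists>\<iota> \<pi> :: nat \<Rightarrow> 'a list \<Rightarrow> 'a list \<Rightarrow> complex.
          (\<forall>j<k. well_def_mat G H Y X (\<iota> j) \<and> equiv_mat G L R Y X (\<iota> j)
                \<and> well_def_mat G H X Y (\<pi> j) \<and> equiv_mat G L R X Y (\<pi> j)) \<and>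
          (\<forall>xs\<in>X. \<forall>xs'\<in>X.
             (\<Sum>j<k. \<Sum>C\<in>Y // balrel G H Y. \<pi> j xs' (SOME ys. ys \<in> C) * \<iota> j (SOME ys. ys \<in> C) xs)
             = (if bal G H xs' xs then 1 else 0))))"

definition has_depth :: "('a, 'b) monoid_scheme \<Rightarrow> 'a set \<Rightarrow> nat \<Rightarrow> bool" where
  "has_depth G H d \<longleftrightarrow>
     (d = 1 \<and> bimod_summand G H H H (tuples G 1) {[h] | h. h \<in> H}) \<or>
     (\<exists>n\<ge>1. d = 2 * n \<and> bimod_summand G H (carrier G) H (tuples G (n + 1)) (tuples G n)) \<or>
     (\<exists>n\<ge>1. d = 2 * n + 1 \<and> bimod_summand G H H H (tuples G (n + 1)) (tuples G n))"

definition depth :: "('a, 'b) monoid_scheme \<Rightarrow> 'a set \<Rightarrow> nat" where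
  "depth G H = (LEAST d. d > 0 \<and> has_depth G H d)"

definition left_cosets :: "('a, 'b) monoid_scheme \<Rightarrow> 'a set \<Rightarrow> 'a set set" where
  "left_cosets G H = {a <#\<^bsub>G\<^esub> H | a. a \<in> carrier G}"

definition perm_char :: "('a, 'b) monoid_scheme \<Rightarrow> 'a set \<Rightarrow> 'a \<Rightarrow> nat" where
  "perm_char G H x = card {C \<in> left_cosets G H. x <#\<^bsub>G\<^esub> C = C}"

definition conj_class :: "('a, 'b) monoid_scheme \<Rightarrow> 'a \<Rightarrow> 'a set" where
  "conj_class G x = {g \<otimes>\<^bsub>G\<^esub> x \<otimes>\<^bsub>G\<^esub> inv\<^bsub>G\<^esub> g | g. g \<in> carrier G}"

definition Q :: "('a, 'b) monoid_scheme \<Rightarrow> 'a set \<Rightarrow> nat \<Rightarrow> real" where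
  "Q G H t = (\<Sum>C\<in>{conj_class G x | x. x \<in> carrier G \<and> prime (group.ord G x)}.
      real (card C) * (real (perm_char G H (SOME x. x \<in> C)) / real (card (left_cosets G H))) ^ t)"

definition core_free :: "('a, 'b) monoid_scheme \<Rightarrow> 'a set \<Rightarrow> bool" where
  "core_free G H \<longleftrightarrow> (\<Inter>g\<in>carrier G. (inv\<^bsub>G\<^esub> g <#\<^bsub>G\<^esub> H) #>\<^bsub>G\<^esub> g) = {\<one>\<^bsub>G\<^esub>}"

end

(*
  The m-fold tensor power of CG over CH is the permutation module on m-tuples of group elements
  modulo balancing, and the class of a tuple (g_1, ..., g_m) is determined by the cosets
  g_1 ... g_i H (0 < i < m) together with the full product g_1 ... g_m.  If H x H acts freely on
  the class of some m-tuple, that orbit spans a free (CH, CH)-bimodule, and every transitive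
  permutation bimodule is a direct summand of a free one (average over H x H).  Hence the
  (m+1)-fold power is a summand of copies of the m-fold power, and the depth is at most 2m + 1.

  A free tuple comes from a base: if the cosets r_0 H, ..., r_m H have trivial pointwise
  stabiliser, then H x H acts freely on the class of (r_0^-1 r_1, ..., r_(m-1)^-1 r_m).
  A base of size t exists when Q(G,t) < 1: every t-tuple of points that is not a base is fixed
  pointwise by an element x of prime order, and x fixes chi(x)^t tuples, so at most
  Q(G,t) n^t < n^t tuples are not bases.

  For depth 3, the depths 1 and 2 are excluded: they would make the number of left translates
  a x of a pure tensor x that balance with x b independent of b in H, which fails for x = g
  and x = 1 (x) g as soon as g b g^-1 is not in H; such g and b exist because H is nontrivial
  and core-free.
*)

theory Submission
  imports Defs
begin

(* HOL-Library's multiset syntax also uses <#; hiding it lets left cosets parse unambiguously. *)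
no_notation (ASCII) subset_mset (infix \<open><#\<close> 50)

section \<open>Prefix products and balanced tuples\<close>

primrec list_prod :: "('a, 'b) monoid_scheme \<Rightarrow> 'a list \<Rightarrow> 'a" where
  "list_prod G [] = \<one>\<^bsub>G\<^esub>"
| "list_prod G (x # xs) = x \<otimes>\<^bsub>G\<^esub> list_prod G xs"

definition prefix_prod :: "('a, 'b) monoid_scheme \<Rightarrow> 'a list \<Rightarrow> nat \<Rightarrow> 'a" where
  "prefix_prod G xs i = list_prod G (take i xs)"

definition act :: "('a, 'b) monoid_scheme \<Rightarrow> 'a \<Rightarrow> 'a \<Rightarrow> 'a list \<Rightarrow> 'a list" where
  "act G a b xs = rmul G (lmul G a xs) b"

lemma in_tuplesD:
  assumes "xs \<in> tuples G p" "0 < p"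
  shows "xs \<noteq> []" "set xs \<subseteq> carrier G"
  using assms by (auto simp: tuples_def)

lemma finite_tuples: "finite (carrier G) \<Longrightarrow> finite (tuples G p)"
  unfolding tuples_def using finite_lists_length_eq[of "carrier G" p] by (simp add: conj_commute)

context group
begin

lemma inv_m_cancel_left [simp]: "x \<in> carrier G \<Longrightarrow> y \<in> carrier G \<Longrightarrow> inv x \<otimes> (x \<otimes> y) = y"
  by (simp add: m_assoc[symmetric])

lemma m_inv_cancel_left [simp]: "x \<in> carrier G \<Longrightarrow> y \<in> carrier G \<Longrightarrow> x \<otimes> (inv x \<otimes> y) = y"
  by (simp add: m_assoc[symmetric])

lemma nth_in_carrier [simp]: "set xs \<subseteq> carrier G \<Longrightarrow> i < length xs \<Longrightarrow> xs ! i \<in> carrier G"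
  by (meson nth_mem subsetD)

lemma list_prod_closed [simp]: "set xs \<subseteq> carrier G \<Longrightarrow> list_prod G xs \<in> carrier G"
  by (induction xs) auto

lemma list_prod_append:
  "set xs \<subseteq> carrier G \<Longrightarrow> set ys \<subseteq> carrier G \<Longrightarrow> list_prod G (xs @ ys) = list_prod G xs \<otimes> list_prod G ys"
  by (induction xs) (auto simp: m_assoc)

lemma prefix_prod_closed [simp]: "set xs \<subseteq> carrier G \<Longrightarrow> prefix_prod G xs i \<in> carrier G"
  unfolding prefix_prod_def by (meson list_prod_closed set_take_subset subset_trans)

lemma prefix_prod_0 [simp]: "prefix_prod G xs 0 = \<one>"
  by (simp add: prefix_prod_def)

lemma prefix_prod_Suc:
  assumes "set xs \<subseteq> carrier G" "i < length xs"
  shows "prefix_prod G xs (Suc i) = prefix_prod G xs i \<otimes> xs ! i"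
proof -
  have "set (take i xs) \<subseteq> carrier G"
    using assms(1) by (meson set_take_subset subset_trans)
  then show ?thesis
    using assms by (simp add: prefix_prod_def take_Suc_conv_app_nth list_prod_append)
qed

lemma nth_eq_prefix_prod:
  "set xs \<subseteq> carrier G \<Longrightarrow> i < length xs \<Longrightarrow>
    xs ! i = inv (prefix_prod G xs i) \<otimes> prefix_prod G xs (Suc i)"
  by (simp add: prefix_prod_Suc m_assoc[symmetric])

lemma prefix_prod_inject:
  assumes "set xs \<subseteq> carrier G" "set ys \<subseteq> carrier G" "length ys = length xs"
    and "\<And>i. i \<le> length xs \<Longrightarrow> prefix_prod G ys i = prefix_prod G xs i"
  shows "ys = xs"
  using assms by (intro nth_equalityI) (simp_all add: nth_eq_prefix_prod)

lemma prefix_prod_twist: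
  assumes "set xs \<subseteq> carrier G" "\<And>j. c j \<in> carrier G" "c 0 = \<one>" "i \<le> length xs"
  shows "prefix_prod G (map (\<lambda>j. inv (c j) \<otimes> xs ! j \<otimes> c (Suc j)) [0..<length xs]) i
           = prefix_prod G xs i \<otimes> c i"
  using assms(4)
proof (induction i)
  case 0
  then show ?case using assms(3) by simp
next
  case (Suc i)
  have "set (map (\<lambda>j. inv (c j) \<otimes> xs ! j \<otimes> c (Suc j)) [0..<length xs]) \<subseteq> carrier G"
    using assms(1,2) by auto
  with Suc assms(1,2) show ?case
    by (simp add: prefix_prod_Suc m_assoc[symmetric]) (simp add: m_assoc)
qed

lemma length_act [simp]: "xs \<noteq> [] \<Longrightarrow> length (act G a b xs) = length xs"
  by (cases xs) (simp_all add: act_def lmul_def rmul_def)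

lemma act_not_Nil [simp]: "act G a b xs \<noteq> []"
  by (simp add: act_def rmul_def)

lemma act_Cons:
  "ys \<noteq> [] \<Longrightarrow> act G a b (x # ys) = (a \<otimes> x) # butlast ys @ [last ys \<otimes> b]"
  by (simp add: act_def lmul_def rmul_def)

lemma act_singleton [simp]: "act G a b [x] = [a \<otimes> x \<otimes> b]"
  by (simp add: act_def lmul_def rmul_def)

lemma act_closed:
  assumes "xs \<noteq> []" "set xs \<subseteq> carrier G" "a \<in> carrier G" "b \<in> carrier G"
  shows "set (act G a b xs) \<subseteq> carrier G"
proof (cases "tl xs = []")
  case True
  then show ?thesis using assms by (cases xs) auto
next
  case False
  then have "last (tl xs) \<in> carrier G" "set (butlast (tl xs)) \<subseteq> carrier G"
    using assms(1,2) by (cases xs; auto dest: in_set_butlastD)+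
  then show ?thesis using assms act_Cons[OF False] by (cases xs) auto
qed

lemma act_act:
  assumes "xs \<noteq> []" "set xs \<subseteq> carrier G" "a \<in> carrier G" "b \<in> carrier G" "a' \<in> carrier G" "b' \<in> carrier G"
  shows "act G a b (act G a' b' xs) = act G (a \<otimes> a') (b' \<otimes> b) xs"
proof (cases "tl xs = []")
  case True
  then show ?thesis using assms by (cases xs) (auto simp: m_assoc)
next
  case False
  then have "last (tl xs) \<in> carrier G" "hd xs \<in> carrier G"
    using assms(1,2) by (cases xs; auto)+
  then show ?thesis using assms act_Cons[OF False] by (cases xs) (auto simp: act_Cons m_assoc)
qed

lemma act_one:
  assumes "xs \<noteq> []" "set xs \<subseteq> carrier G"
  shows "act G \<one> \<one> xs = xs"
proof (cases "tl xs = []")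
  case True
  then show ?thesis using assms by (cases xs) auto
next
  case False
  then have "last (tl xs) \<in> carrier G"
    using assms by (cases xs) auto
  then show ?thesis using assms False act_Cons[OF False] by (cases xs) auto
qed

lemma prefix_prod_lmul:
  assumes "xs \<noteq> []" "set xs \<subseteq> carrier G" "a \<in> carrier G" "0 < i"
  shows "prefix_prod G (lmul G a xs) i = a \<otimes> prefix_prod G xs i"
proof -
  obtain x ys where xs: "xs = x # ys" using assms(1) by (cases xs) auto
  obtain i' where i: "i = Suc i'" using assms(4) by (cases i) auto
  have "set (take i' ys) \<subseteq> carrier G"
    using assms(2) xs by (meson set_subset_Cons set_take_subset subset_trans)
  then show ?thesis using xs i assms by (simp add: lmul_def prefix_prod_def m_assoc)
qed

lemma prefix_prod_rmul:
  assumes "xs \<noteq> []" "set xs \<subseteq> carrier G" "b \<in> carrier G" "i \<le> length xs"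
  shows "prefix_prod G (rmul G xs b) i = (if i = length xs then prefix_prod G xs i \<otimes> b else prefix_prod G xs i)"
proof -
  obtain ys y where xs: "xs = ys @ [y]" using assms(1) by (cases xs rule: rev_cases) auto
  then have "set ys \<subseteq> carrier G" "y \<in> carrier G" using assms(2) by auto
  with xs assms(3,4) show ?thesis
    by (cases "i = length xs") (auto simp: rmul_def prefix_prod_def list_prod_append m_assoc)
qed

lemma prefix_prod_act:
  assumes "xs \<noteq> []" "set xs \<subseteq> carrier G" "a \<in> carrier G" "b \<in> carrier G" "0 < i" "i \<le> length xs"
  shows "prefix_prod G (act G a b xs) i
           = (if i = length xs then a \<otimes> prefix_prod G xs i \<otimes> b else a \<otimes> prefix_prod G xs i)"
proof -
  have "lmul G a xs \<noteq> []" "set (lmul G a xs) \<subseteq> carrier G"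
    using assms(1-3) by (cases xs; simp add: lmul_def)+
  then show ?thesis unfolding act_def
    using prefix_prod_rmul[of "lmul G a xs" b i] prefix_prod_lmul[OF assms(1-3,5)] assms
    by (cases xs) (auto simp: lmul_def)
qed

lemma act_in_tuples:
  "xs \<in> tuples G p \<Longrightarrow> 0 < p \<Longrightarrow> a \<in> carrier G \<Longrightarrow> b \<in> carrier G \<Longrightarrow> act G a b xs \<in> tuples G p"
  using act_closed[of xs a b] by (auto simp: tuples_def)

context
  fixes H assumes H: "subgroup H G"
begin

lemma bal_iff_twist:
  "bal G H xs ys \<longleftrightarrow> (\<exists>c. (\<forall>j. c j \<in> H) \<and> c 0 = \<one> \<and> c (length xs) = \<one> \<and>
           ys = map (\<lambda>j. inv (c j) \<otimes> xs ! j \<otimes> c (Suc j)) [0..<length xs])"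
    (is "_ \<longleftrightarrow> (\<exists>c. ?twist c)")
proof
  assume "bal G H xs ys"
  then obtain hs where hs: "length hs = length xs - 1" "set hs \<subseteq> H"
    and ys: "ys = map (\<lambda>j. inv (if 0 < j \<and> j < length xs then hs ! (j - 1) else \<one>) \<otimes> xs ! j \<otimes>
      (if 0 < Suc j \<and> Suc j < length xs then hs ! (Suc j - 1) else \<one>)) [0..<length xs]"
    unfolding bal_def Let_def by blast
  have "(if 0 < j \<and> j < length xs then hs ! (j - 1) else \<one>) \<in> H" for j
    using hs subgroup.one_closed[OF H] by (auto intro: nth_mem)
  with ys show "\<exists>c. ?twist c" by (intro exI[of _ "\<lambda>j. if 0 < j \<and> j < length xs then hs ! (j - 1) else \<one>"]) auto
next
  assume "\<exists>c. ?twist c"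
  then obtain c where c: "?twist c" ..
  define hs where "hs = map c [1..<length xs]"
  have "c j = (if 0 < j \<and> j < length xs then hs ! (j - 1) else \<one>)" if "j \<le> length xs" for j
    using that c by (auto simp: hs_def)
  then have "ys = map (\<lambda>j. inv (if 0 < j \<and> j < length xs then hs ! (j - 1) else \<one>) \<otimes> xs ! j \<otimes>
      (if 0 < Suc j \<and> Suc j < length xs then hs ! (Suc j - 1) else \<one>)) [0..<length xs]"
    using c by (auto simp del: upt_Suc)
  moreover have "set hs \<subseteq> H" using c by (auto simp: hs_def)
  ultimately show "bal G H xs ys"
    unfolding bal_def Let_def by (intro conjI exI[of _ hs]) (auto simp: hs_def)
qed

lemma bal_iff_prefix_prod:
  assumes xs: "set xs \<subseteq> carrier G"
  shows "bal G H xs ys \<longleftrightarrow> length ys = length xs \<and> set ys \<subseteq> carrier G \<and>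
     (\<forall>i. 0 < i \<and> i < length xs \<longrightarrow> (prefix_prod G xs i, prefix_prod G ys i) \<in> rcong H) \<and>
     prefix_prod G ys (length xs) = prefix_prod G xs (length xs)"
    (is "_ \<longleftrightarrow> ?prefix_prods")
proof
  assume "bal G H xs ys"
  then obtain c where c: "\<And>j. c j \<in> H" "c 0 = \<one>" "c (length xs) = \<one>"
    and ys: "ys = map (\<lambda>j. inv (c j) \<otimes> xs ! j \<otimes> c (Suc j)) [0..<length xs]"
    using bal_iff_twist by blast
  have cG: "c j \<in> carrier G" for j
    using c(1) subgroup.mem_carrier[OF H] by blast
  have "prefix_prod G ys i = prefix_prod G xs i \<otimes> c i" if "i \<le> length xs" for i
    unfolding ys using prefix_prod_twist[of xs c, OF xs cG c(2) that] .
  moreover have "set ys \<subseteq> carrier G"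
    using xs cG by (auto simp: ys)
  ultimately show ?prefix_prods
    using xs c cG by (auto simp: r_congruent_def ys m_assoc[symmetric])
next
  assume R: ?prefix_prods
  define c where "c j = (if 0 < j \<and> j < length xs
    then inv (prefix_prod G xs j) \<otimes> prefix_prod G ys j else \<one>)" for j
  have cH: "c j \<in> H" for j
    using R subgroup.one_closed[OF H] by (auto simp: c_def r_congruent_def)
  have cG: "c j \<in> carrier G" for j
    using cH subgroup.mem_carrier[OF H] by blast
  have "ys = map (\<lambda>j. inv (c j) \<otimes> xs ! j \<otimes> c (Suc j)) [0..<length xs]"
  proof (rule prefix_prod_inject)
    fix i assume "i \<le> length (map (\<lambda>j. inv (c j) \<otimes> xs ! j \<otimes> c (Suc j)) [0..<length xs])"
    then show "prefix_prod G ys i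
        = prefix_prod G (map (\<lambda>j. inv (c j) \<otimes> xs ! j \<otimes> c (Suc j)) [0..<length xs]) i"
      using prefix_prod_twist[of xs c i, OF xs cG] R xs by (auto simp: c_def m_assoc[symmetric])
  qed (use R xs cG in auto)
  moreover have "c 0 = \<one>" "c (length xs) = \<one>"
    by (simp_all add: c_def)
  ultimately show "bal G H xs ys"
    using bal_iff_twist cH by blast
qed

lemma bal_refl: "set xs \<subseteq> carrier G \<Longrightarrow> bal G H xs xs"
  by (simp add: bal_iff_prefix_prod r_congruent_def subgroup.one_closed[OF H])

lemma bal_sym: "set xs \<subseteq> carrier G \<Longrightarrow> bal G H xs ys \<Longrightarrow> bal G H ys xs"
  using subgroup.equiv_rcong[OF H is_group]
  by (simp add: bal_iff_prefix_prod) (meson equivE symD)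

lemma bal_trans:
  "set xs \<subseteq> carrier G \<Longrightarrow> bal G H xs ys \<Longrightarrow> bal G H ys zs \<Longrightarrow> bal G H xs zs"
  using subgroup.equiv_rcong[OF H is_group]
  by (simp add: bal_iff_prefix_prod) (meson equivE transD)

lemma equiv_balrel: "equiv (tuples G p) (balrel G H (tuples G p))"
  unfolding equiv_def refl_on_def sym_def trans_def balrel_def tuples_def
  using bal_refl bal_sym bal_trans by blast

lemma bal_act:
  assumes xs: "xs \<noteq> []" "set xs \<subseteq> carrier G"
    and ab: "a \<in> carrier G" "b \<in> carrier G" and "bal G H xs ys"
  shows "bal G H (act G a b xs) (act G a b ys)"
proof -
  have ys: "length ys = length xs" "set ys \<subseteq> carrier G" "ys \<noteq> []"
    and cong: "\<And>i. 0 < i \<Longrightarrow> i < length xs \<Longrightarrow> inv (prefix_prod G xs i) \<otimes> prefix_prod G ys i \<in> H"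
    and last: "prefix_prod G ys (length xs) = prefix_prod G xs (length xs)"
    using \<open>bal G H xs ys\<close> xs by (auto simp: bal_iff_prefix_prod[OF xs(2)] r_congruent_def)
  show ?thesis
    unfolding bal_iff_prefix_prod[OF act_closed[OF xs ab]]
    using prefix_prod_act[OF xs ab] prefix_prod_act[OF ys(3,2) ab] cong last ys xs ab
    by (auto simp: r_congruent_def inv_mult_group m_assoc act_closed)
qed

lemma bal_act_iff:
  assumes xs: "xs \<noteq> []" "set xs \<subseteq> carrier G"
    and ys: "ys \<noteq> []" "set ys \<subseteq> carrier G" and ab: "a \<in> carrier G" "b \<in> carrier G"
  shows "bal G H (act G a b xs) ys \<longleftrightarrow> bal G H xs (act G (inv a) (inv b) ys)"
proof
  assume "bal G H (act G a b xs) ys"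
  then have "bal G H (act G (inv a) (inv b) (act G a b xs)) (act G (inv a) (inv b) ys)"
    using bal_act[OF _ act_closed[OF xs ab]] xs ab by simp
  then show "bal G H xs (act G (inv a) (inv b) ys)"
    using act_act[OF xs] act_one[OF xs] ab by simp
next
  assume "bal G H xs (act G (inv a) (inv b) ys)"
  then have "bal G H (act G a b xs) (act G a b (act G (inv a) (inv b) ys))"
    using bal_act[OF xs ab] by simp
  then show "bal G H (act G a b xs) ys"
    using act_act[OF ys] act_one[OF ys] ab by simp
qed

end

end

section \<open>Tuples with a free two-sided action\<close>

lemma in_quotient_eq_class:
  assumes "equiv A r" "X \<in> A // r" "x \<in> X"
  shows "X = r `` {x}"
proof -
  obtain y where "X = r `` {y}" using assms(2) by (rule quotientE)
  with assms show ?thesis using equiv_class_eq by fastforce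
qed

lemma finite_equiv_representatives:
  assumes r: "equiv X r" and "finite X"
  obtains k :: nat and s where "\<And>j. j < k \<Longrightarrow> s j \<in> X" "\<And>x. x \<in> X \<Longrightarrow> \<exists>!j. j < k \<and> (s j, x) \<in> r"
proof -
  obtain k and e :: "nat \<Rightarrow> _ set" where e: "bij_betw e {0..<k} (X // r)"
    using ex_bij_betw_nat_finite finite_quotient[OF \<open>finite X\<close> equiv_type[OF r]] by blast
  define s where "s j = (SOME x. x \<in> e j)" for j
  have cls: "e j \<in> X // r" if "j < k" for j
    using bij_betwE[OF e] that by simp
  have s: "s j \<in> e j" if "j < k" for j
    using in_quotient_imp_non_empty[OF r cls[OF that]] unfolding s_def by (simp add: some_in_eq)
  have s_X: "s j \<in> X" if "j < k" for j
    using in_quotient_imp_subset[OF r cls[OF that]] s[OF that] by blast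
  have "\<exists>!j. j < k \<and> (s j, x) \<in> r" if x: "x \<in> X" for x
  proof -
    have iff: "(s j, x) \<in> r \<longleftrightarrow> e j = r `` {x}" if j: "j < k" for j
    proof -
      have "e j = r `` {s j}" using in_quotient_eq_class[OF r cls[OF j] s[OF j]] .
      then show ?thesis
        by (simp add: equiv_class_eq_iff[OF r, of "s j" x] s_X[OF j] x)
    qed
    obtain j where j: "j < k" "e j = r `` {x}"
      using bij_betw_imp_surj_on[OF e] quotientI[OF x] by (metis atLeastLessThan_iff imageE)
    show ?thesis
    proof (rule ex1I[of _ j])
      show "j < k \<and> (s j, x) \<in> r" using j iff by blast
    next
      fix j' assume "j' < k \<and> (s j', x) \<in> r"
      then show "j' = j"
        using iff inj_onD[OF bij_betw_imp_inj_on[OF e], of j' j] j by auto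
    qed
  qed
  with s_X show thesis by (rule that[of k s])
qed

lemma sum_quotient_reindex:
  assumes r: "equiv Y r" and "finite Y" and f: "f ` I \<subseteq> Y" and inj: "inj_on (\<lambda>i. r `` {f i}) I"
    and F_cong: "\<And>y y'. (y, y') \<in> r \<Longrightarrow> F y' = F y"
    and F_zero: "\<And>y. y \<in> Y \<Longrightarrow> \<forall>i\<in>I. (f i, y) \<notin> r \<Longrightarrow> F y = 0"
  shows "(\<Sum>C \<in> Y // r. F (SOME y. y \<in> C)) = (\<Sum>i\<in>I. F (f i))"
proof -
  have rep: "(SOME y. y \<in> C) \<in> C" if "C \<in> Y // r" for C
    using in_quotient_imp_non_empty[OF r that] by (simp add: some_in_eq)
  have "F (SOME y. y \<in> C) = 0" if C: "C \<in> Y // r - (\<lambda>i. r `` {f i}) ` I" for C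
  proof (rule F_zero)
    show "(SOME y. y \<in> C) \<in> Y"
      using C rep in_quotient_imp_subset[OF r] by blast
    show "\<forall>i\<in>I. (f i, SOME y. y \<in> C) \<notin> r"
      using C rep in_quotient_eq_class[OF r] equiv_class_eq[OF r] by blast
  qed
  then have "(\<Sum>C \<in> Y // r. F (SOME y. y \<in> C)) = (\<Sum>C \<in> (\<lambda>i. r `` {f i}) ` I. F (SOME y. y \<in> C))"
    using f finite_quotient[OF \<open>finite Y\<close> equiv_type[OF r]]
    by (intro sum.mono_neutral_right) (auto intro: quotientI)
  also have "\<dots> = (\<Sum>i\<in>I. F (SOME y. y \<in> r `` {f i}))"
    by (simp add: sum.reindex[OF inj])
  also have "\<dots> = (\<Sum>i\<in>I. F (f i))"
  proof (rule sum.cong[OF refl])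
    fix i assume "i \<in> I"
    then have "r `` {f i} \<in> Y // r" using f by (auto intro: quotientI)
    then have "(f i, SOME y. y \<in> r `` {f i}) \<in> r" using rep by blast
    then show "F (SOME y. y \<in> r `` {f i}) = F (f i)" by (rule F_cong)
  qed
  finally show ?thesis .
qed

definition act_free :: "('a, 'b) monoid_scheme \<Rightarrow> 'a set \<Rightarrow> 'a list \<Rightarrow> bool" where
  "act_free G H ys \<longleftrightarrow> (\<forall>h1\<in>H. \<forall>h2\<in>H. \<forall>h1'\<in>H. \<forall>h2'\<in>H.
     bal G H (act G h1 h2 ys) (act G h1' h2' ys) \<longrightarrow> h1 = h1' \<and> h2 = h2')"

definition joint_orbit ::
  "('a, 'b) monoid_scheme \<Rightarrow> 'a set \<Rightarrow> 'a list \<Rightarrow> 'a list \<Rightarrow> 'a list \<Rightarrow> 'a list \<Rightarrow> bool" where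
  "joint_orbit G H ys xs ys' xs' \<longleftrightarrow>
     (\<exists>h1\<in>H. \<exists>h2\<in>H. bal G H (act G h1 h2 ys) ys' \<and> bal G H (act G h1 h2 xs) xs')"

context group
begin

context
  fixes H assumes H: "subgroup H G"
begin

lemma joint_orbit_bal_cong:
  assumes ys: "ys \<in> tuples G q" "0 < q" and xs: "xs \<in> tuples G p" "0 < p"
    and "joint_orbit G H ys xs ys' xs'" "bal G H ys' ys''" "bal G H xs' xs''"
  shows "joint_orbit G H ys xs ys'' xs''"
proof -
  obtain h1 h2 where h: "h1 \<in> H" "h2 \<in> H"
    and "bal G H (act G h1 h2 ys) ys'" "bal G H (act G h1 h2 xs) xs'"
    using assms(5) unfolding joint_orbit_def by blast
  moreover have "set (act G h1 h2 ys) \<subseteq> carrier G" "set (act G h1 h2 xs) \<subseteq> carrier G"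
    using act_in_tuples[OF ys] act_in_tuples[OF xs] h subgroup.mem_carrier[OF H] by (auto simp: tuples_def)
  ultimately show ?thesis
    unfolding joint_orbit_def using bal_trans[OF H] assms(6,7) by blast
qed

lemma joint_orbit_act:
  assumes ys: "ys \<in> tuples G q" "0 < q" and xs: "xs \<in> tuples G p" "0 < p"
    and ab: "a \<in> H" "b \<in> H" and "joint_orbit G H ys xs ys' xs'"
  shows "joint_orbit G H ys xs (act G a b ys') (act G a b xs')"
proof -
  obtain h1 h2 where h: "h1 \<in> H" "h2 \<in> H"
    and "bal G H (act G h1 h2 ys) ys'" "bal G H (act G h1 h2 xs) xs'"
    using assms(7) unfolding joint_orbit_def by blast
  note carrier = ab[THEN subgroup.mem_carrier[OF H]] h[THEN subgroup.mem_carrier[OF H]]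
  have "bal G H (act G (a \<otimes> h1) (h2 \<otimes> b) ys) (act G a b ys')"
    using bal_act[OF H _ act_closed carrier(1,2) \<open>bal G H (act G h1 h2 ys) ys'\<close>]
      act_act[OF in_tuplesD[OF ys] carrier] in_tuplesD[OF ys] carrier by simp
  moreover have "bal G H (act G (a \<otimes> h1) (h2 \<otimes> b) xs) (act G a b xs')"
    using bal_act[OF H _ act_closed carrier(1,2) \<open>bal G H (act G h1 h2 xs) xs'\<close>]
      act_act[OF in_tuplesD[OF xs] carrier] in_tuplesD[OF xs] carrier by simp
  moreover have "a \<otimes> h1 \<in> H" "h2 \<otimes> b \<in> H"
    using h ab subgroup.m_closed[OF H] by auto
  ultimately show ?thesis
    unfolding joint_orbit_def by blast
qed

lemma joint_orbit_act_iff: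
  assumes ys: "ys \<in> tuples G q" "0 < q" and xs: "xs \<in> tuples G p" "0 < p"
    and ys': "ys' \<in> tuples G q" and xs': "xs' \<in> tuples G p" and ab: "a \<in> H" "b \<in> H"
  shows "joint_orbit G H ys xs (act G a b ys') (act G a b xs') \<longleftrightarrow> joint_orbit G H ys xs ys' xs'"
proof
  assume "joint_orbit G H ys xs (act G a b ys') (act G a b xs')"
  then have "joint_orbit G H ys xs (act G (inv a) (inv b) (act G a b ys')) (act G (inv a) (inv b) (act G a b xs'))"
    using joint_orbit_act[OF ys xs] ab subgroup.m_inv_closed[OF H] by blast
  moreover note carrier = ab[THEN subgroup.mem_carrier[OF H]]
  ultimately show "joint_orbit G H ys xs ys' xs'"
    using act_act[OF in_tuplesD[OF ys' ys(2)]] act_act[OF in_tuplesD[OF xs' xs(2)]]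
      act_one[OF in_tuplesD[OF ys' ys(2)]] act_one[OF in_tuplesD[OF xs' xs(2)]] by simp
qed (rule joint_orbit_act[OF ys xs ab])

lemma joint_orbit_free_iff:
  assumes ys: "ys \<in> tuples G q" "0 < q" and xs: "xs \<in> tuples G p" "0 < p"
    and free: "act_free G H ys" and h: "h1 \<in> H" "h2 \<in> H"
  shows "joint_orbit G H ys xs (act G h1 h2 ys) xs' \<longleftrightarrow> bal G H (act G h1 h2 xs) xs'"
proof
  assume "joint_orbit G H ys xs (act G h1 h2 ys) xs'"
  then obtain h1' h2' where "h1' \<in> H" "h2' \<in> H"
    and "bal G H (act G h1' h2' ys) (act G h1 h2 ys)" "bal G H (act G h1' h2' xs) xs'"
    unfolding joint_orbit_def by blast
  with free h show "bal G H (act G h1 h2 xs) xs'"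
    unfolding act_free_def by blast
next
  assume "bal G H (act G h1 h2 xs) xs'"
  moreover have "bal G H (act G h1 h2 ys) (act G h1 h2 ys)"
    using bal_refl[OF H act_closed] in_tuplesD[OF ys] h subgroup.mem_carrier[OF H] by blast
  ultimately show "joint_orbit G H ys xs (act G h1 h2 ys) xs'"
    unfolding joint_orbit_def using h by blast
qed

lemma sum_quotient_act_free:
  assumes fin: "finite (carrier G)" and ys: "ys \<in> tuples G q" "0 < q" and free: "act_free G H ys"
    and F_cong: "\<And>zs zs'. zs \<in> tuples G q \<Longrightarrow> bal G H zs zs' \<Longrightarrow> F zs' = F zs"
    and F_zero: "\<And>zs. zs \<in> tuples G q \<Longrightarrow> \<forall>h1\<in>H. \<forall>h2\<in>H. \<not> bal G H (act G h1 h2 ys) zs \<Longrightarrow> F zs = 0"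
  shows "(\<Sum>C \<in> tuples G q // balrel G H (tuples G q). F (SOME zs. zs \<in> C))
           = (\<Sum>(h1, h2) \<in> H \<times> H. F (act G h1 h2 ys))"
proof -
  have act_ys: "(\<lambda>(h1, h2). act G h1 h2 ys) ` (H \<times> H) \<subseteq> tuples G q"
    using act_in_tuples[OF ys] subgroup.mem_carrier[OF H] by auto
  have inj: "inj_on (\<lambda>h. balrel G H (tuples G q) `` {case h of (h1, h2) \<Rightarrow> act G h1 h2 ys}) (H \<times> H)"
  proof (rule inj_onI, clarify)
    fix h1 h2 h1' h2' assume h: "h1 \<in> H" "h2 \<in> H" "h1' \<in> H" "h2' \<in> H"
      and "balrel G H (tuples G q) `` {act G h1 h2 ys} = balrel G H (tuples G q) `` {act G h1' h2' ys}"
    moreover have "act G h1 h2 ys \<in> tuples G q" "act G h1' h2' ys \<in> tuples G q"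
      using act_ys h by auto
    ultimately have "bal G H (act G h1 h2 ys) (act G h1' h2' ys)"
      using eq_equiv_class_iff[OF equiv_balrel[OF H]] by (simp add: balrel_def)
    with free h show "h1 = h1' \<and> h2 = h2'"
      unfolding act_free_def by blast
  qed
  have "(\<Sum>C \<in> tuples G q // balrel G H (tuples G q). F (SOME zs. zs \<in> C))
      = (\<Sum>h \<in> H \<times> H. F (case h of (h1, h2) \<Rightarrow> act G h1 h2 ys))"
  proof (rule sum_quotient_reindex[OF equiv_balrel[OF H] finite_tuples[OF fin] act_ys inj])
    show "F zs' = F zs" if "(zs, zs') \<in> balrel G H (tuples G q)" for zs zs'
      using that F_cong by (simp add: balrel_def)
    show "F zs = 0" if "zs \<in> tuples G q"
      and "\<forall>h\<in>H \<times> H. (case h of (h1, h2) \<Rightarrow> act G h1 h2 ys, zs) \<notin> balrel G H (tuples G q)" for zs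
      using that act_in_tuples[OF ys] subgroup.mem_carrier[OF H] by (intro F_zero) (auto simp: balrel_def)
  qed
  then show ?thesis
    by (simp add: case_prod_beta)
qed

lemma sum_quotient_joint_orbit:
  fixes ys xs :: "'a list"
  assumes fin: "finite (carrier G)" and ys: "ys \<in> tuples G q" "0 < q" and free: "act_free G H ys"
    and xs: "xs \<in> tuples G p" "0 < p" and xs': "xs' \<in> tuples G p" and xs'': "xs'' \<in> tuples G p"
  shows "(\<Sum>C \<in> tuples G q // balrel G H (tuples G q).
            (if joint_orbit G H ys xs (SOME zs. zs \<in> C) xs' then 1 else 0) *
            (if joint_orbit G H ys xs (SOME zs. zs \<in> C) xs'' then 1 else 0))
       = (\<Sum>(h1, h2) \<in> H \<times> H. (if bal G H (act G h1 h2 xs) xs' then 1 else 0) *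
            (if bal G H (act G h1 h2 xs) xs'' then 1 else (0 :: complex)))"
proof -
  have "(\<Sum>C \<in> tuples G q // balrel G H (tuples G q).
            (if joint_orbit G H ys xs (SOME zs. zs \<in> C) xs' then 1 else 0) *
            (if joint_orbit G H ys xs (SOME zs. zs \<in> C) xs'' then 1 else 0))
       = (\<Sum>(h1, h2) \<in> H \<times> H. (if joint_orbit G H ys xs (act G h1 h2 ys) xs' then 1 else 0) *
            (if joint_orbit G H ys xs (act G h1 h2 ys) xs'' then 1 else (0 :: complex)))"
  proof (rule sum_quotient_act_free[OF fin ys free])
    fix zs zs' assume zs: "zs \<in> tuples G q" and "bal G H zs zs'"
    then have "bal G H zs' zs"
      using bal_sym[OF H] in_tuplesD[OF zs ys(2)] by blast
    then have "joint_orbit G H ys xs zs' x \<longleftrightarrow> joint_orbit G H ys xs zs x" if "x \<in> tuples G p" for x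
      using joint_orbit_bal_cong[OF ys xs] bal_refl[OF H in_tuplesD(2)[OF that xs(2)]] \<open>bal G H zs zs'\<close>
      by blast
    with xs' xs'' show "(if joint_orbit G H ys xs zs' xs' then 1 else 0) * (if joint_orbit G H ys xs zs' xs'' then 1 else 0)
      = (if joint_orbit G H ys xs zs xs' then 1 else 0) * (if joint_orbit G H ys xs zs xs'' then 1 else (0 :: complex))"
      by simp
  qed (auto simp: joint_orbit_def)
  also have "\<dots> = (\<Sum>(h1, h2) \<in> H \<times> H. (if bal G H (act G h1 h2 xs) xs' then 1 else 0) *
            (if bal G H (act G h1 h2 xs) xs'' then 1 else (0 :: complex)))"
    using joint_orbit_free_iff[OF ys xs free] by (intro sum.cong) auto
  finally show ?thesis .
qed

lemma sum_representatives_act: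
  fixes k :: nat
  assumes p: "0 < p" and s: "\<And>j. j < k \<Longrightarrow> s j \<in> tuples G p"
    and s_unique: "\<And>xs. xs \<in> tuples G p \<Longrightarrow> \<exists>!j. j < k \<and> bal G H (s j) xs"
    and ab: "a \<in> carrier G" "b \<in> carrier G" and xs: "xs \<in> tuples G p" and xs': "xs' \<in> tuples G p"
  shows "(\<Sum>j<k. (if bal G H (act G a b (s j)) xs' then 1 else 0) *
                 (if bal G H (act G a b (s j)) xs then 1 else 0)) = (if bal G H xs' xs then 1 else (0 :: complex))"
proof -
  have iff: "bal G H (act G a b (s j)) xs \<longleftrightarrow> bal G H (s j) (act G (inv a) (inv b) xs)" if "j < k" for j
    using bal_act_iff[OF H in_tuplesD[OF s[OF that] p] in_tuplesD[OF xs p] ab] .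
  from s_unique[OF act_in_tuples[OF xs p inv_closed inv_closed], OF ab]
  obtain j0 where j0: "j0 < k" "bal G H (s j0) (act G (inv a) (inv b) xs)"
    and unique: "\<And>j. j < k \<Longrightarrow> bal G H (s j) (act G (inv a) (inv b) xs) \<Longrightarrow> j = j0"
    by (elim ex1E) blast
  have "(\<Sum>j<k. (if bal G H (act G a b (s j)) xs' then 1 else 0) *
                 (if bal G H (act G a b (s j)) xs then 1 else 0))
      = (\<Sum>j<k. if j = j0 then (if bal G H (act G a b (s j0)) xs' then 1 else (0 :: complex)) else 0)"
  proof (rule sum.cong)
    fix j assume "j \<in> {..<k}"
    then have "bal G H (act G a b (s j)) xs \<longleftrightarrow> j = j0"
      using iff unique j0 by blast
    then show "(if bal G H (act G a b (s j)) xs' then 1 else 0) * (if bal G H (act G a b (s j)) xs then 1 else 0)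
      = (if j = j0 then (if bal G H (act G a b (s j0)) xs' then 1 else (0 :: complex)) else 0)"
      by auto
  qed simp
  also have "\<dots> = (if bal G H (act G a b (s j0)) xs' then 1 else 0)"
    using j0(1) by simp
  also have "\<dots> = (if bal G H xs' xs then 1 else 0)"
  proof -
    have "bal G H (act G a b (s j0)) xs"
      using iff j0 by blast
    moreover have "set (act G a b (s j0)) \<subseteq> carrier G"
      using act_closed in_tuplesD[OF s[OF j0(1)] p] ab by blast
    ultimately have "bal G H (act G a b (s j0)) xs' \<longleftrightarrow> bal G H xs' xs"
      using bal_sym[OF H] bal_trans[OF H] in_tuplesD(2)[OF xs p] in_tuplesD(2)[OF xs' p] by blast
    then show ?thesis by simp
  qed
  finally show ?thesis .
qed

lemma sum_joint_orbit_representatives: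
  fixes k :: nat
  assumes fin: "finite (carrier G)" and p: "0 < p" and ys: "ys \<in> tuples G q" "0 < q"
    and free: "act_free G H ys" and s: "\<And>j. j < k \<Longrightarrow> s j \<in> tuples G p"
    and s_unique: "\<And>xs. xs \<in> tuples G p \<Longrightarrow> \<exists>!j. j < k \<and> bal G H (s j) xs"
    and xs: "xs \<in> tuples G p" and xs': "xs' \<in> tuples G p"
  shows "(\<Sum>j<k. \<Sum>C \<in> tuples G q // balrel G H (tuples G q).
            (if joint_orbit G H ys (s j) (SOME zs. zs \<in> C) xs' then 1 else 0) *
            (if joint_orbit G H ys (s j) (SOME zs. zs \<in> C) xs then 1 else 0))
       = of_nat (card H) ^ 2 * (if bal G H xs' xs then 1 else (0 :: complex))"
proof -
  have "(\<Sum>j<k. \<Sum>C \<in> tuples G q // balrel G H (tuples G q).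
            (if joint_orbit G H ys (s j) (SOME zs. zs \<in> C) xs' then 1 else 0) *
            (if joint_orbit G H ys (s j) (SOME zs. zs \<in> C) xs then 1 else (0 :: complex)))
      = (\<Sum>j<k. \<Sum>(h1, h2) \<in> H \<times> H. (if bal G H (act G h1 h2 (s j)) xs' then 1 else 0) *
            (if bal G H (act G h1 h2 (s j)) xs then 1 else 0))"
    using sum_quotient_joint_orbit[OF fin ys free s p xs' xs] by simp
  also have "\<dots> = (\<Sum>(h1, h2) \<in> H \<times> H. \<Sum>j<k. (if bal G H (act G h1 h2 (s j)) xs' then 1 else 0) *
            (if bal G H (act G h1 h2 (s j)) xs then 1 else 0))"
    by (subst sum.swap) (simp add: case_prod_beta)
  also have "\<dots> = (\<Sum>(h1, h2) \<in> H \<times> H. if bal G H xs' xs then 1 else 0)"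
    using sum_representatives_act[OF p s s_unique _ _ xs xs'] subgroup.mem_carrier[OF H]
    by (intro sum.cong) auto
  also have "\<dots> = of_nat (card H) ^ 2 * (if bal G H xs' xs then 1 else 0)"
    by (simp add: card_cartesian_product power2_eq_square)
  finally show ?thesis .
qed

lemma joint_orbit_indicator_bimodule_maps:
  fixes \<iota> :: "'a list \<Rightarrow> 'a list \<Rightarrow> complex"
  assumes ys: "ys \<in> tuples G q" "0 < q" and xs: "xs \<in> tuples G p" "0 < p"
    and \<iota>: "\<And>zs xs'. \<iota> zs xs' = (if joint_orbit G H ys xs zs xs' then c else 0)"
    and \<pi>: "\<And>xs' zs. \<pi> xs' zs = \<iota> zs xs' / d"
  shows "well_def_mat G H (tuples G q) (tuples G p) \<iota> \<and> equiv_mat G H H (tuples G q) (tuples G p) \<iota>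
    \<and> well_def_mat G H (tuples G p) (tuples G q) \<pi> \<and> equiv_mat G H H (tuples G p) (tuples G q) \<pi>"
proof -
  have "joint_orbit G H ys xs zs xs' \<longleftrightarrow> joint_orbit G H ys xs zs' xs''"
    if "zs \<in> tuples G q" "xs' \<in> tuples G p" "bal G H zs zs'" "bal G H xs' xs''" for zs zs' xs' xs''
    using joint_orbit_bal_cong[OF ys xs] bal_sym[OF H] that in_tuplesD[OF that(1) ys(2)] in_tuplesD[OF that(2) xs(2)]
    by blast
  then show ?thesis
    unfolding well_def_mat_def equiv_mat_def act_def[symmetric] \<iota> \<pi>
    using joint_orbit_act_iff[OF ys xs] by auto
qed

(* The j-th copy is the free bimodule on the orbit of ys, mapped onto the orbit of the
   representative s j. *)
lemma bimod_summand_if_act_free: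
  assumes fin: "finite (carrier G)" and p: "0 < p" and ys: "ys \<in> tuples G q" "0 < q"
    and free: "act_free G H ys"
  shows "bimod_summand G H H H (tuples G p) (tuples G q)"
proof -
  obtain k :: nat and s where s: "\<And>j. j < k \<Longrightarrow> s j \<in> tuples G p"
    and s_class: "\<And>xs. xs \<in> tuples G p \<Longrightarrow> \<exists>!j. j < k \<and> (s j, xs) \<in> balrel G H (tuples G p)"
    using finite_equiv_representatives[OF equiv_balrel[OF H] finite_tuples[OF fin]] by blast
  have s_unique: "\<exists>!j. j < k \<and> bal G H (s j) xs" if "xs \<in> tuples G p" for xs
    using s_class[OF that] s that by (simp add: balrel_def cong: conj_cong)
  have "replicate p \<one> \<in> tuples G p"
    by (auto simp: tuples_def)
  then have "0 < k"
    using s_unique by fastforce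
  define N where "N = card H"
  have "0 < N"
    unfolding N_def using subgroup.one_closed[OF H] fin subgroup.subset[OF H]
    by (metis card_gt_0_iff empty_iff finite_subset)
  define \<iota> :: "nat \<Rightarrow> 'a list \<Rightarrow> 'a list \<Rightarrow> complex"
    where "\<iota> j zs xs = (if joint_orbit G H ys (s j) zs xs then 1 else 0)" for j zs xs
  define \<pi> :: "nat \<Rightarrow> 'a list \<Rightarrow> 'a list \<Rightarrow> complex"
    where "\<pi> j xs zs = \<iota> j zs xs / of_nat N ^ 2" for j xs zs
  have "(\<Sum>j<k. \<Sum>C \<in> tuples G q // balrel G H (tuples G q). \<pi> j xs' (SOME zs. zs \<in> C) * \<iota> j (SOME zs. zs \<in> C) xs)
      = (if bal G H xs' xs then 1 else 0)" if xs: "xs \<in> tuples G p" and xs': "xs' \<in> tuples G p" for xs xs'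
    using sum_joint_orbit_representatives[OF fin p ys free s s_unique xs xs'] \<open>0 < N\<close>
    by (simp add: \<pi>_def \<iota>_def N_def sum_divide_distrib[symmetric])
  moreover have "\<forall>j<k. well_def_mat G H (tuples G q) (tuples G p) (\<iota> j) \<and> equiv_mat G H H (tuples G q) (tuples G p) (\<iota> j)
    \<and> well_def_mat G H (tuples G p) (tuples G q) (\<pi> j) \<and> equiv_mat G H H (tuples G p) (tuples G q) (\<pi> j)"
    using joint_orbit_indicator_bimodule_maps[OF ys s p \<iota>_def \<pi>_def] by blast
  ultimately show ?thesis
    unfolding bimod_summand_def using \<open>0 < k\<close> by (intro exI[of _ k] conjI exI[of _ \<iota>] exI[of _ \<pi>]) simp_all
qed

end

end

section \<open>Depth one and two\<close>

lemma has_depth_1_iff: "has_depth G H 1 \<longleftrightarrow> bimod_summand G H H H (tuples G 1) {[h] | h. h \<in> H}"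
  by (auto simp: has_depth_def)

lemma has_depth_2_iff: "has_depth G H 2 \<longleftrightarrow> bimod_summand G H (carrier G) H (tuples G 2) (tuples G 1)"
proof -
  have "(2::nat) = 2 * n \<longleftrightarrow> n = 1" "(2::nat) \<noteq> 2 * n + 1" for n :: nat
    by arith+
  then show ?thesis
    unfolding has_depth_def by (auto simp: numeral_2_eq_2)
qed

context group
begin

lemma sum_subgroup_translate_left:
  assumes L: "subgroup L G" and g: "g \<in> L"
  shows "(\<Sum>a\<in>L. f (g \<otimes> a)) = (\<Sum>a\<in>L. f a)"
proof (rule sum.reindex_bij_witness[of _ "\<lambda>a. inv g \<otimes> a" "\<lambda>a. g \<otimes> a"])
  note carrier = subgroup.mem_carrier[OF L]
  show "inv g \<otimes> (g \<otimes> a) = a" "g \<otimes> a \<in> L" if "a \<in> L" for a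
    using that g carrier subgroup.m_closed[OF L] by simp_all
  show "g \<otimes> (inv g \<otimes> a) = a" "inv g \<otimes> a \<in> L" if "a \<in> L" for a
    using that g carrier subgroup.m_closed[OF L] subgroup.m_inv_closed[OF L] by simp_all
qed simp

lemma sum_subgroup_translate_right:
  assumes L: "subgroup L G" and g: "g \<in> L"
  shows "(\<Sum>a\<in>L. f (a \<otimes> g)) = (\<Sum>a\<in>L. f a)"
proof (rule sum.reindex_bij_witness[of _ "\<lambda>a. a \<otimes> inv g" "\<lambda>a. a \<otimes> g"])
  note carrier = subgroup.mem_carrier[OF L]
  show "a \<otimes> g \<otimes> inv g = a" "a \<otimes> g \<in> L" if "a \<in> L" for a
    using that g carrier subgroup.m_closed[OF L] by (simp_all add: m_assoc)
  show "a \<otimes> inv g \<otimes> g = a" "a \<otimes> inv g \<in> L" if "a \<in> L" for a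
    using that g carrier subgroup.m_closed[OF L] subgroup.m_inv_closed[OF L] by (simp_all add: m_assoc)
qed simp

lemma bal_singleton: "y \<in> carrier G \<Longrightarrow> bal G H [y] zs \<longleftrightarrow> zs = [y]"
  by (auto simp: bal_def Let_def)

lemma sum_quotient_singletons:
  assumes "L \<subseteq> carrier G"
  shows "(\<Sum>C \<in> ((\<lambda>y. [y]) ` L) // balrel G H ((\<lambda>y. [y]) ` L). F C) = (\<Sum>y\<in>L. F {[y]})"
proof -
  have "balrel G H ((\<lambda>y. [y]) ` L) `` {[y]} = {[y]}" if "y \<in> L" for y
    using that assms bal_singleton[of y H] by (auto simp: balrel_def)
  then have "((\<lambda>y. [y]) ` L) // balrel G H ((\<lambda>y. [y]) ` L) = (\<lambda>y. {[y]}) ` L"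
    unfolding quotient_def by auto
  moreover have "inj_on (\<lambda>y. {[y]}) L"
    by (auto intro: inj_onI)
  ultimately show ?thesis
    by (simp add: sum.reindex)
qed

lemma equiv_mat_singletons_left:
  assumes M: "equiv_mat G L H ((\<lambda>y. [y]) ` L) (tuples G p) M" and L: "subgroup L G" and H: "subgroup H G"
    and x: "x \<in> tuples G p" "0 < p" and y: "y \<in> L"
  shows "(\<Sum>a\<in>L. M [y] (act G a \<one> x)) = (\<Sum>a\<in>L. M [\<one>] (act G a \<one> x))"
proof -
  note carrier = subgroup.mem_carrier[OF L]
  have "M [y] (act G a \<one> x) = M [\<one>] (act G (inv y \<otimes> a) \<one> x)" if a: "a \<in> L" for a
  proof -
    have "act G a \<one> x \<in> tuples G p"
      using act_in_tuples[OF x] a carrier by simp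
    then have "M (act G (inv y) \<one> [y]) (act G (inv y) \<one> (act G a \<one> x)) = M [y] (act G a \<one> x)"
      using M[unfolded equiv_mat_def act_def[symmetric]] y subgroup.m_inv_closed[OF L] subgroup.one_closed[OF H]
      by blast
    then show ?thesis
      using act_act[OF in_tuplesD[OF x]] y a carrier by simp
  qed
  then have "(\<Sum>a\<in>L. M [y] (act G a \<one> x)) = (\<Sum>a\<in>L. M [\<one>] (act G (inv y \<otimes> a) \<one> x))"
    by (rule sum.cong[OF refl])
  also have "\<dots> = (\<Sum>a\<in>L. M [\<one>] (act G a \<one> x))"
    using sum_subgroup_translate_left[OF L subgroup.m_inv_closed[OF L y]] .
  finally show ?thesis .
qed

lemma equiv_mat_singletons_right:
  assumes M: "equiv_mat G L H (tuples G p) ((\<lambda>y. [y]) ` L) M" and L: "subgroup L G" and H: "subgroup H G"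
    and "H \<subseteq> L" and x: "x \<in> tuples G p" "0 < p" and b: "b \<in> H"
  shows "(\<Sum>y\<in>L. M (act G \<one> b x) [y]) = (\<Sum>y\<in>L. M x [y])"
proof -
  note carrier = subgroup.mem_carrier[OF L]
  have b': "inv b \<in> H" "inv b \<in> L" "b \<in> carrier G"
    using b \<open>H \<subseteq> L\<close> subgroup.m_inv_closed[OF H] subgroup.mem_carrier[OF H] by auto
  have "M (act G \<one> b x) [y] = M x [y \<otimes> inv b]" if y: "y \<in> L" for y
  proof -
    have "act G \<one> b x \<in> tuples G p"
      using act_in_tuples[OF x] b' by simp
    then have "M (act G \<one> (inv b) (act G \<one> b x)) (act G \<one> (inv b) [y]) = M (act G \<one> b x) [y]"
      using M[unfolded equiv_mat_def act_def[symmetric]] y b' subgroup.one_closed[OF L]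
      by blast
    then show ?thesis
      using act_act[OF in_tuplesD[OF x]] act_one[OF in_tuplesD[OF x]] y b' carrier by simp
  qed
  then have "(\<Sum>y\<in>L. M (act G \<one> b x) [y]) = (\<Sum>y\<in>L. M x [y \<otimes> inv b])"
    by (rule sum.cong[OF refl])
  also have "\<dots> = (\<Sum>y\<in>L. M x [y])"
    using sum_subgroup_translate_right[OF L b'(2)] .
  finally show ?thesis .
qed

lemma card_left_translates_eq_sum:
  fixes k :: nat and \<iota> \<pi> :: "nat \<Rightarrow> 'a list \<Rightarrow> 'a list \<Rightarrow> complex"
  assumes fin: "finite (carrier G)" and L: "subgroup L G" and H: "subgroup H G"
    and x: "x \<in> tuples G p" "0 < p" and xs': "xs' \<in> tuples G p"
    and \<iota>: "\<And>j. j < k \<Longrightarrow> equiv_mat G L H ((\<lambda>y. [y]) ` L) (tuples G p) (\<iota> j)"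
    and ident: "\<And>xs. xs \<in> tuples G p \<Longrightarrow>
      (\<Sum>j<k. \<Sum>C \<in> ((\<lambda>y. [y]) ` L) // balrel G H ((\<lambda>y. [y]) ` L).
          \<pi> j xs' (SOME ys. ys \<in> C) * \<iota> j (SOME ys. ys \<in> C) xs) = (if bal G H xs' xs then 1 else 0)"
  shows "of_nat (card {a \<in> L. bal G H xs' (act G a \<one> x)})
           = (\<Sum>j<k. (\<Sum>y\<in>L. \<pi> j xs' [y]) * (\<Sum>a\<in>L. \<iota> j [\<one>] (act G a \<one> x)))"
proof -
  have "finite L"
    using fin subgroup.subset[OF L] finite_subset by blast
  then have "of_nat (card {a \<in> L. bal G H xs' (act G a \<one> x)})
      = (\<Sum>a\<in>L. if bal G H xs' (act G a \<one> x) then 1 else (0 :: complex))"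
    by (simp add: sum.inter_filter[symmetric])
  also have "\<dots> = (\<Sum>a\<in>L. \<Sum>j<k. \<Sum>y\<in>L. \<pi> j xs' [y] * \<iota> j [y] (act G a \<one> x))"
  proof (rule sum.cong[OF refl])
    fix a assume "a \<in> L"
    then have "act G a \<one> x \<in> tuples G p"
      using act_in_tuples[OF x] subgroup.mem_carrier[OF L] by simp
    from ident[OF this, unfolded sum_quotient_singletons[OF subgroup.subset[OF L]]]
    show "(if bal G H xs' (act G a \<one> x) then 1 else 0) = (\<Sum>j<k. \<Sum>y\<in>L. \<pi> j xs' [y] * \<iota> j [y] (act G a \<one> x))"
      by simp
  qed
  also have "\<dots> = (\<Sum>j<k. \<Sum>y\<in>L. \<pi> j xs' [y] * (\<Sum>a\<in>L. \<iota> j [y] (act G a \<one> x)))"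
    by (subst sum.swap, rule sum.cong[OF refl], subst sum.swap) (simp add: sum_distrib_left)
  also have "\<dots> = (\<Sum>j<k. \<Sum>y\<in>L. \<pi> j xs' [y] * (\<Sum>a\<in>L. \<iota> j [\<one>] (act G a \<one> x)))"
    using equiv_mat_singletons_left[OF \<iota> L H x] by (auto intro!: sum.cong)
  also have "\<dots> = (\<Sum>j<k. (\<Sum>y\<in>L. \<pi> j xs' [y]) * (\<Sum>a\<in>L. \<iota> j [\<one>] (act G a \<one> x)))"
    by (simp add: sum_distrib_right)
  finally show ?thesis .
qed

(* Through the splitting, the count depends on xs' only via the sums over y of \<pi> j xs' [y],
   which are invariant under right translation by H. *)
lemma card_left_translates_right_invariant:
  assumes fin: "finite (carrier G)" and L: "subgroup L G" and H: "subgroup H G" and "H \<subseteq> L"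
    and S: "bimod_summand G H L H (tuples G p) ((\<lambda>y. [y]) ` L)"
    and x: "x \<in> tuples G p" "0 < p" and b: "b \<in> H"
  shows "card {a \<in> L. bal G H (act G \<one> b x) (act G a \<one> x)} = card {a \<in> L. bal G H x (act G a \<one> x)}"
proof -
  obtain k :: nat and \<iota> \<pi> :: "nat \<Rightarrow> 'a list \<Rightarrow> 'a list \<Rightarrow> complex"
    where \<iota>: "\<And>j. j < k \<Longrightarrow> equiv_mat G L H ((\<lambda>y. [y]) ` L) (tuples G p) (\<iota> j)"
    and \<pi>: "\<And>j. j < k \<Longrightarrow> equiv_mat G L H (tuples G p) ((\<lambda>y. [y]) ` L) (\<pi> j)"
    and ident: "\<And>xs xs'. xs \<in> tuples G p \<Longrightarrow> xs' \<in> tuples G p \<Longrightarrow>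
      (\<Sum>j<k. \<Sum>C \<in> ((\<lambda>y. [y]) ` L) // balrel G H ((\<lambda>y. [y]) ` L).
          \<pi> j xs' (SOME ys. ys \<in> C) * \<iota> j (SOME ys. ys \<in> C) xs) = (if bal G H xs' xs then 1 else 0)"
    using S unfolding bimod_summand_def by blast
  have bx: "act G \<one> b x \<in> tuples G p"
    using act_in_tuples[OF x] b subgroup.mem_carrier[OF H] by simp
  have "(of_nat (card {a \<in> L. bal G H (act G \<one> b x) (act G a \<one> x)}) :: complex)
      = (\<Sum>j<k. (\<Sum>y\<in>L. \<pi> j (act G \<one> b x) [y]) * (\<Sum>a\<in>L. \<iota> j [\<one>] (act G a \<one> x)))"
    by (rule card_left_translates_eq_sum[where \<pi> = \<pi>, OF fin L H x bx \<iota> ident[OF _ bx]])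
  also have "\<dots> = (\<Sum>j<k. (\<Sum>y\<in>L. \<pi> j x [y]) * (\<Sum>a\<in>L. \<iota> j [\<one>] (act G a \<one> x)))"
    using equiv_mat_singletons_right[OF \<pi> L H \<open>H \<subseteq> L\<close> x b] by simp
  also have "\<dots> = of_nat (card {a \<in> L. bal G H x (act G a \<one> x)})"
    by (rule card_left_translates_eq_sum[where \<pi> = \<pi>, OF fin L H x x(1) \<iota> ident[OF _ x(1)], symmetric])
  finally show ?thesis
    by (simp only: of_nat_eq_iff)
qed

lemma bal_pair:
  assumes H: "subgroup H G" and "x1 \<in> carrier G" "x2 \<in> carrier G" "y1 \<in> carrier G" "y2 \<in> carrier G"
  shows "bal G H [x1, x2] [y1, y2] \<longleftrightarrow> inv x1 \<otimes> y1 \<in> H \<and> y1 \<otimes> y2 = x1 \<otimes> x2"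
proof -
  have "(\<forall>i. 0 < i \<and> i < Suc (Suc 0) \<longrightarrow> P i) \<longleftrightarrow> P (Suc 0)" for P :: "nat \<Rightarrow> bool"
    by (auto simp: less_Suc_eq)
  with assms show ?thesis
    by (simp add: bal_iff_prefix_prod[OF H] prefix_prod_def r_congruent_def)
qed

lemma not_normal_if_core_free:
  assumes H: "subgroup H G" and "H \<noteq> {\<one>}" and "core_free G H"
  shows "\<exists>g\<in>carrier G. \<exists>b\<in>H. g \<otimes> b \<otimes> inv g \<notin> H"
proof (rule ccontr)
  assume normal: "\<not> ?thesis"
  obtain h where h: "h \<in> H" "h \<noteq> \<one>"
    using \<open>H \<noteq> {\<one>}\<close> subgroup.one_closed[OF H] by blast
  have "h \<in> (inv g <#\<^bsub>G\<^esub> H) #>\<^bsub>G\<^esub> g" if g: "g \<in> carrier G" for g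
  proof -
    have "g \<otimes> h \<otimes> inv g \<in> H" using normal g h(1) by blast
    moreover have "h = inv g \<otimes> (g \<otimes> h \<otimes> inv g) \<otimes> g"
      using g h(1) subgroup.mem_carrier[OF H] by (simp add: m_assoc)
    ultimately show ?thesis
      unfolding l_coset_def r_coset_def by blast
  qed
  with h(2) \<open>core_free G H\<close> show False
    unfolding core_free_def by blast
qed

lemma not_has_depth_1:
  assumes fin: "finite (carrier G)" and H: "subgroup H G"
    and g: "g \<in> carrier G" and b: "b \<in> H" and not_normal: "g \<otimes> b \<otimes> inv g \<notin> H"
  shows "\<not> has_depth G H 1"
  unfolding has_depth_1_iff
proof
  note carrier = subgroup.mem_carrier[OF H]
  assume "bimod_summand G H H H (tuples G 1) {[h] | h. h \<in> H}"
  moreover have "{[h] | h. h \<in> H} = (\<lambda>y. [y]) ` H" by blast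
  ultimately have S: "bimod_summand G H H H (tuples G 1) ((\<lambda>y. [y]) ` H)" by simp
  have "[g] \<in> tuples G 1" using g by (simp add: tuples_def)
  then have "card {a \<in> H. bal G H (act G \<one> b [g]) (act G a \<one> [g])}
      = card {a \<in> H. bal G H [g] (act G a \<one> [g])}"
    by (rule card_left_translates_right_invariant[OF fin H H subset_refl S _ _ b]) simp
  moreover have "{a \<in> H. bal G H (act G \<one> b [g]) (act G a \<one> [g])} = {}"
  proof -
    have "a \<otimes> g \<noteq> g \<otimes> b" if "a \<in> H" for a
      using that not_normal g b carrier by (metis inv_solve_right m_closed)
    then show ?thesis
      using g b carrier by (auto simp: bal_singleton)
  qed
  moreover have "{a \<in> H. bal G H [g] (act G a \<one> [g])} = {\<one>}"
    using g carrier subgroup.one_closed[OF H] by (auto simp: bal_singleton)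
  ultimately have "card ({} :: 'a set) = card {\<one>}" by (simp only:)
  then show False by simp
qed

lemma not_has_depth_2:
  assumes fin: "finite (carrier G)" and H: "subgroup H G"
    and g: "g \<in> carrier G" and b: "b \<in> H" and not_normal: "g \<otimes> b \<otimes> inv g \<notin> H"
  shows "\<not> has_depth G H 2"
  unfolding has_depth_2_iff
proof
  note carrier = subgroup.mem_carrier[OF H]
  assume "bimod_summand G H (carrier G) H (tuples G 2) (tuples G 1)"
  moreover have "tuples G 1 = (\<lambda>y. [y]) ` carrier G"
    by (auto simp: tuples_def length_Suc_conv)
  ultimately have S: "bimod_summand G H (carrier G) H (tuples G 2) ((\<lambda>y. [y]) ` carrier G)" by simp
  have "[\<one>, g] \<in> tuples G 2" using g by (simp add: tuples_def)
  then have "card {a \<in> carrier G. bal G H (act G \<one> b [\<one>, g]) (act G a \<one> [\<one>, g])}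
      = card {a \<in> carrier G. bal G H [\<one>, g] (act G a \<one> [\<one>, g])}"
    by (rule card_left_translates_right_invariant[OF fin subgroup_self H subgroup.subset[OF H] S _ _ b]) simp
  moreover have act: "act G a c [\<one>, g] = [a, g \<otimes> c]" if "a \<in> carrier G" "c \<in> carrier G" for a c
    using that g by (simp add: act_Cons)
  moreover have "{a \<in> carrier G. bal G H (act G \<one> b [\<one>, g]) (act G a \<one> [\<one>, g])} = {}"
  proof -
    have "a \<in> H \<Longrightarrow> a \<otimes> g \<noteq> g \<otimes> b" if "a \<in> carrier G" for a
      using that not_normal g b carrier by (metis inv_solve_right m_closed)
    then show ?thesis
      using g b carrier act by (auto simp: bal_pair[OF H])
  qed
  moreover have "{a \<in> carrier G. bal G H [\<one>, g] (act G a \<one> [\<one>, g])} = {\<one>}"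
    using g subgroup.one_closed[OF H] act by (auto simp: bal_pair[OF H])
  ultimately have "card ({} :: 'a set) = card {\<one>}" by (simp only:)
  then show False by simp
qed

end

section \<open>Bases and the permutation character\<close>

definition fixed_cosets :: "('a, 'b) monoid_scheme \<Rightarrow> 'a set \<Rightarrow> 'a \<Rightarrow> 'a set set" where
  "fixed_cosets G H x = {C \<in> left_cosets G H. x <#\<^bsub>G\<^esub> C = C}"

definition is_base :: "('a, 'b) monoid_scheme \<Rightarrow> 'a set set \<Rightarrow> bool" where
  "is_base G B \<longleftrightarrow> (\<forall>g\<in>carrier G. (\<forall>C\<in>B. g <#\<^bsub>G\<^esub> C = C) \<longrightarrow> g = \<one>\<^bsub>G\<^esub>)"

context group
begin

context
  fixes H assumes H: "subgroup H G"
begin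

lemma left_cosets_subset: "C \<in> left_cosets G H \<Longrightarrow> C \<subseteq> carrier G"
  unfolding left_cosets_def using l_coset_subset_G subgroup.subset[OF H] by blast

lemma finite_left_cosets: "finite (carrier G) \<Longrightarrow> finite (left_cosets G H)"
  using left_cosets_subset by (meson Pow_iff finite_Pow_iff finite_subset subsetI)

lemma subgroup_in_left_cosets: "H \<in> left_cosets G H"
  unfolding left_cosets_def using lcos_mult_one[OF subgroup.subset[OF H]] by force

lemma l_coset_in_left_cosets:
  assumes "C \<in> left_cosets G H" "g \<in> carrier G"
  shows "g <# C \<in> left_cosets G H"
proof -
  obtain a where "a \<in> carrier G" "C = a <# H"
    using assms(1) unfolding left_cosets_def by blast
  with assms(2) show ?thesis
    unfolding left_cosets_def by (auto simp: lcos_m_assoc[OF subgroup.subset[OF H]])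
qed

lemma l_coset_fixed:
  assumes a: "a \<in> carrier G" and x: "x \<in> carrier G" and "inv a \<otimes> x \<otimes> a \<in> H"
  shows "x <# (a <# H) = a <# H"
proof -
  have "x <# (a <# H) = (a \<otimes> (inv a \<otimes> x \<otimes> a)) <# H"
    using a x by (simp add: lcos_m_assoc[OF subgroup.subset[OF H]] m_assoc)
  also have "\<dots> = a <# ((inv a \<otimes> x \<otimes> a) <# H)"
    using a x by (simp add: lcos_m_assoc[OF subgroup.subset[OF H]])
  also have "(inv a \<otimes> x \<otimes> a) <# H = H"
    using coset_join3[OF _ H assms(3)] a x by simp
  finally show ?thesis .
qed

lemma fixed_cosets_conj:
  assumes x: "x \<in> carrier G" and g: "g \<in> carrier G"
  shows "bij_betw (\<lambda>C. g <# C) (fixed_cosets G H x) (fixed_cosets G H (g \<otimes> x \<otimes> inv g))"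
proof (rule bij_betw_byWitness[where f' = "\<lambda>C. inv g <# C"])
  have cancel: "inv g <# (g <# C) = C" "g <# (inv g <# C) = C" if "C \<subseteq> carrier G" for C
    using that g by (simp_all add: lcos_m_assoc lcos_mult_one)
  then show "\<forall>C\<in>fixed_cosets G H x. inv g <# (g <# C) = C"
    "\<forall>C\<in>fixed_cosets G H (g \<otimes> x \<otimes> inv g). g <# (inv g <# C) = C"
    using left_cosets_subset unfolding fixed_cosets_def by auto
  have "(g \<otimes> x \<otimes> inv g) <# (g <# C) = g <# (x <# C)" if "C \<subseteq> carrier G" for C
    using that g x by (simp add: lcos_m_assoc m_assoc)
  then show "(\<lambda>C. g <# C) ` fixed_cosets G H x \<subseteq> fixed_cosets G H (g \<otimes> x \<otimes> inv g)"
    using left_cosets_subset l_coset_in_left_cosets g unfolding fixed_cosets_def by auto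
  have "x <# (inv g <# C) = inv g <# ((g \<otimes> x \<otimes> inv g) <# C)" if "C \<subseteq> carrier G" for C
    using that g x by (simp add: lcos_m_assoc m_assoc)
  then show "(\<lambda>C. inv g <# C) ` fixed_cosets G H (g \<otimes> x \<otimes> inv g) \<subseteq> fixed_cosets G H x"
    using left_cosets_subset l_coset_in_left_cosets g unfolding fixed_cosets_def by auto
qed

lemma perm_char_conj:
  "x \<in> carrier G \<Longrightarrow> g \<in> carrier G \<Longrightarrow> perm_char G H (g \<otimes> x \<otimes> inv g) = perm_char G H x"
  unfolding perm_char_def fixed_cosets_def[symmetric] using fixed_cosets_conj bij_betw_same_card by metis

end

lemma pow_conj: "x \<in> carrier G \<Longrightarrow> g \<in> carrier G \<Longrightarrow> (g \<otimes> x \<otimes> inv g) [^] (n::nat) = g \<otimes> x [^] n \<otimes> inv g"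
  by (induction n) (simp_all add: m_assoc)

lemma ord_conj:
  assumes x: "x \<in> carrier G" and g: "g \<in> carrier G"
  shows "ord (g \<otimes> x \<otimes> inv g) = ord x"
proof -
  have "(g \<otimes> x \<otimes> inv g) [^] n = \<one> \<longleftrightarrow> x [^] n = \<one>" for n :: nat
    using x g by (simp add: pow_conj inv_solve_right')
  then show ?thesis
    using ord_unique[of "g \<otimes> x \<otimes> inv g" "ord x"] pow_eq_id[OF x] x g by simp
qed

lemma conj_class_conj:
  assumes x: "x \<in> carrier G" and g: "g \<in> carrier G"
  shows "conj_class G (g \<otimes> x \<otimes> inv g) = conj_class G x"
proof -
  have "h \<otimes> (g \<otimes> x \<otimes> inv g) \<otimes> inv h = (h \<otimes> g) \<otimes> x \<otimes> inv (h \<otimes> g)" if "h \<in> carrier G" for h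
    using that x g by (simp add: m_assoc inv_mult_group)
  moreover have "h \<otimes> x \<otimes> inv h = (h \<otimes> inv g) \<otimes> (g \<otimes> x \<otimes> inv g) \<otimes> inv (h \<otimes> inv g)" if "h \<in> carrier G" for h
    using that x g by (simp add: m_assoc inv_mult_group)
  ultimately show ?thesis
    unfolding conj_class_def using g by (metis (no_types, opaque_lifting) inv_closed m_closed)
qed

lemma mem_conj_class_iff:
  assumes "x \<in> carrier G" "y \<in> carrier G"
  shows "y \<in> conj_class G x \<longleftrightarrow> conj_class G y = conj_class G x"
proof
  show "y \<in> conj_class G x \<Longrightarrow> conj_class G y = conj_class G x"
    using conj_class_conj assms(1) unfolding conj_class_def by blast
  have "y \<in> conj_class G y"
    unfolding conj_class_def using assms(2) by (auto intro!: exI[of _ \<one>])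
  then show "conj_class G y = conj_class G x \<Longrightarrow> y \<in> conj_class G x" by simp
qed

lemma conj_class_subset: "x \<in> carrier G \<Longrightarrow> conj_class G x \<subseteq> carrier G"
  unfolding conj_class_def by auto

lemma Q_eq_sum_prime_order:
  assumes fin: "finite (carrier G)" and H: "subgroup H G"
  shows "Q G H t = (\<Sum>x \<in> {x \<in> carrier G. prime (ord x)}.
                     (real (perm_char G H x) / real (card (left_cosets G H))) ^ t)"
proof -
  define P where "P = {x \<in> carrier G. prime (ord x)}"
  define f where "f x = (real (perm_char G H x) / real (card (left_cosets G H))) ^ t" for x
  have f_conj: "f y = f x" if "x \<in> carrier G" "y \<in> conj_class G x" for x y
    using that perm_char_conj[OF H] unfolding conj_class_def f_def by auto
  have class_in_P: "{y \<in> P. conj_class G y = conj_class G x} = conj_class G x" if x: "x \<in> P" for x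
  proof (intro equalityI subsetI)
    fix y assume "y \<in> {y \<in> P. conj_class G y = conj_class G x}"
    then show "y \<in> conj_class G x"
      using mem_conj_class_iff[of x y] x unfolding P_def by blast
  next
    fix y assume y: "y \<in> conj_class G x"
    then have "y \<in> carrier G" "ord y = ord x"
      using x ord_conj conj_class_subset unfolding conj_class_def P_def by auto
    with x y show "y \<in> {y \<in> P. conj_class G y = conj_class G x}"
      using mem_conj_class_iff[of x y] unfolding P_def by auto
  qed
  have "(\<Sum>x\<in>P. f x) = (\<Sum>C \<in> conj_class G ` P. \<Sum>y \<in> {y \<in> P. conj_class G y = C}. f y)"
    using fin by (intro sum.image_gen) (simp add: P_def)
  also have "\<dots> = (\<Sum>C \<in> conj_class G ` P. real (card C) * f (SOME x. x \<in> C))"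
  proof (rule sum.cong[OF refl])
    fix C assume "C \<in> conj_class G ` P"
    then obtain x where x: "x \<in> P" "C = conj_class G x" by blast
    then have "x \<in> C"
      using mem_conj_class_iff[of x x] unfolding P_def by simp
    then have "(SOME x. x \<in> C) \<in> C" by (rule someI)
    moreover have "f y = f x" if "y \<in> C" for y
      using f_conj[of x y] x that unfolding P_def by simp
    ultimately show "(\<Sum>y \<in> {y \<in> P. conj_class G y = C}. f y) = real (card C) * f (SOME x. x \<in> C)"
      using class_in_P[OF x(1)] x(2) by simp
  qed
  also have "conj_class G ` P = {conj_class G x | x. x \<in> carrier G \<and> prime (ord x)}"
    unfolding P_def by blast
  finally have "(\<Sum>x\<in>P. f x) = Q G H t"
    by (simp only: Q_def f_def)
  then show ?thesis
    unfolding P_def f_def by (rule sym)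
qed

lemma exists_pow_prime_ord:
  assumes fin: "finite (carrier G)" and g: "g \<in> carrier G" "g \<noteq> \<one>"
  shows "\<exists>k::nat. prime (ord (g [^] k))"
proof -
  have "ord g \<noteq> 1" using ord_eq_1[OF g(1)] g(2) by simp
  then obtain p where p: "prime p" "p dvd ord g" using prime_factor_nat by blast
  then obtain k where k: "ord g = p * k" by blast
  then have "k dvd ord g" "k \<noteq> 0"
    using ord_ge_1[OF fin g(1)] by auto
  then have "ord (g [^] k) = p"
    using ord_pow[OF g(1)] k p(1) by (simp add: prime_gt_0_nat)
  with p(1) show ?thesis by blast
qed

lemma l_coset_pow_fixed:
  assumes "C \<subseteq> carrier G" "g \<in> carrier G" "g <# C = C"
  shows "(g [^] (n::nat)) <# C = C"
proof (induction n)
  case 0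
  then show ?case using lcos_mult_one[OF assms(1)] by simp
next
  case (Suc n)
  have "(g [^] Suc n) <# C = (g [^] n) <# (g <# C)"
    using lcos_m_assoc[OF assms(1) nat_pow_closed assms(2)] assms(2) by simp
  with Suc assms(3) show ?case by simp
qed

lemma fixed_by_prime_ord_if_not_base:
  assumes fin: "finite (carrier G)" and H: "subgroup H G"
    and ws: "set ws \<subseteq> left_cosets G H" and "\<not> is_base G (set ws)"
  shows "\<exists>x\<in>carrier G. prime (ord x) \<and> set ws \<subseteq> fixed_cosets G H x"
proof -
  obtain g where g: "g \<in> carrier G" "g \<noteq> \<one>" "\<forall>C\<in>set ws. g <# C = C"
    using \<open>\<not> is_base G (set ws)\<close> unfolding is_base_def by blast
  obtain k :: nat where "prime (ord (g [^] k))"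
    using exists_pow_prime_ord[OF fin g(1,2)] by blast
  moreover have "(g [^] k) <# C = C" if "C \<in> set ws" for C
    using l_coset_pow_fixed[OF left_cosets_subset[OF H] g(1)] g(3) ws that by blast
  ultimately show ?thesis
    using ws g(1) by (auto simp: fixed_cosets_def)
qed

lemma exists_base_if_Q_less_1:
  assumes fin: "finite (carrier G)" and H: "subgroup H G" and Q: "Q G H t < 1"
  shows "\<exists>ws. set ws \<subseteq> left_cosets G H \<and> length ws = t \<and> is_base G (set ws)"
proof (rule ccontr)
  assume no_base: "\<not> ?thesis"
  define n where "n = card (left_cosets G H)"
  define P where "P = {x \<in> carrier G. prime (ord x)}"
  define B where "B x = {ws. set ws \<subseteq> fixed_cosets G H x \<and> length ws = t}" for x
  have fin_cosets: "finite (left_cosets G H)" and "0 < n"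
    using finite_left_cosets[OF H fin] subgroup_in_left_cosets[OF H] by (auto simp: n_def card_gt_0_iff)
  have "finite P" using fin by (simp add: P_def)
  have fin_fixed: "finite (fixed_cosets G H x)" for x
    using fin_cosets by (simp add: fixed_cosets_def)
  have cover: "{ws. set ws \<subseteq> left_cosets G H \<and> length ws = t} \<subseteq> (\<Union>x\<in>P. B x)"
  proof
    fix ws assume "ws \<in> {ws. set ws \<subseteq> left_cosets G H \<and> length ws = t}"
    then have ws: "set ws \<subseteq> left_cosets G H" "length ws = t" by simp_all
    with no_base have "\<not> is_base G (set ws)" by blast
    with fixed_by_prime_ord_if_not_base[OF fin H ws(1)] ws(2) show "ws \<in> (\<Union>x\<in>P. B x)"
      by (auto simp: P_def B_def)
  qed
  have "finite (\<Union>x\<in>P. B x)"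
    using \<open>finite P\<close> fin_fixed by (simp add: B_def finite_lists_length_eq)
  from card_mono[OF this cover]
  have "n ^ t \<le> card (\<Union>x\<in>P. B x)"
    using fin_cosets by (simp add: card_lists_length_eq n_def)
  also have "\<dots> \<le> (\<Sum>x\<in>P. card (B x))"
    using card_UN_le[OF \<open>finite P\<close>] .
  also have "\<dots> = (\<Sum>x\<in>P. perm_char G H x ^ t)"
    using fin_fixed by (simp add: B_def card_lists_length_eq perm_char_def fixed_cosets_def)
  finally have "real (n ^ t) \<le> real (\<Sum>x\<in>P. perm_char G H x ^ t)"
    by (simp only: of_nat_le_iff)
  moreover have "Q G H t = (\<Sum>x\<in>P. real (perm_char G H x) ^ t) / real n ^ t"
    unfolding Q_eq_sum_prime_order[OF fin H] P_def n_def by (simp add: power_divide sum_divide_distrib)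
  ultimately have "real n ^ t \<le> Q G H t * real n ^ t"
    using \<open>0 < n\<close> by simp
  also have "\<dots> < real n ^ t"
    using Q \<open>0 < n\<close> by simp
  finally show False by simp
qed

section \<open>Depth from a base\<close>

lemma prefix_prod_telescope:
  assumes r: "\<And>j. j \<le> m \<Longrightarrow> r j \<in> carrier G" and "i \<le> m"
  shows "prefix_prod G (map (\<lambda>j. inv (r j) \<otimes> r (Suc j)) [0..<m]) i = inv (r 0) \<otimes> r i"
  using \<open>i \<le> m\<close>
proof (induction i)
  case 0
  then show ?case using r by simp
next
  case (Suc i)
  have "set (map (\<lambda>j. inv (r j) \<otimes> r (Suc j)) [0..<m]) \<subseteq> carrier G"
    using r by auto
  with Suc r show ?case
    by (simp add: prefix_prod_Suc m_assoc)
qed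

lemma list_prod_eq_if_bal_act:
  assumes H: "subgroup H G" and ys: "ys \<noteq> []" "set ys \<subseteq> carrier G"
    and h: "h1 \<in> carrier G" "h2 \<in> carrier G" "h1' \<in> carrier G" "h2' \<in> carrier G"
    and bal: "bal G H (act G h1 h2 ys) (act G h1' h2' ys)"
  shows "h1' \<otimes> list_prod G ys \<otimes> h2' = h1 \<otimes> list_prod G ys \<otimes> h2"
  using bal prefix_prod_act[OF ys, of _ _ "length ys"] h act_closed[OF ys] ys
  by (auto simp: bal_iff_prefix_prod[OF H] prefix_prod_def)

lemma conj_mem_if_bal_act:
  assumes H: "subgroup H G" and ys: "ys \<noteq> []" "set ys \<subseteq> carrier G"
    and h: "h1 \<in> H" "h2 \<in> H" "h1' \<in> H" "h2' \<in> H"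
    and bal: "bal G H (act G h1 h2 ys) (act G h1' h2' ys)" and i: "i \<le> length ys"
  shows "inv (prefix_prod G ys i) \<otimes> (inv h1 \<otimes> h1') \<otimes> prefix_prod G ys i \<in> H"
proof -
  note carrier = h[THEN subgroup.mem_carrier[OF H]]
  have cong: "inv (h1 \<otimes> prefix_prod G ys i) \<otimes> (h1' \<otimes> prefix_prod G ys i) \<in> H" if "0 < i" "i < length ys" for i
    using bal that prefix_prod_act[OF ys] carrier act_closed[OF ys] ys
    by (auto simp: bal_iff_prefix_prod[OF H] r_congruent_def)
  consider "i = 0" | "0 < i" "i < length ys" | "i = length ys"
    using i by linarith
  then show ?thesis
  proof cases
    case 1
    then show ?thesis using h subgroup.m_closed[OF H] subgroup.m_inv_closed[OF H] carrier by simp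
  next
    case 2
    then show ?thesis using cong[OF 2] ys carrier by (simp add: inv_mult_group m_assoc)
  next
    case 3
    define P where "P = list_prod G ys"
    have P: "P \<in> carrier G" using ys by (simp add: P_def)
    have "inv P \<otimes> (inv h1 \<otimes> h1') \<otimes> P = inv P \<otimes> inv h1 \<otimes> (h1' \<otimes> P \<otimes> h2') \<otimes> inv h2'"
      using carrier P by (simp add: m_assoc)
    also have "\<dots> = inv P \<otimes> inv h1 \<otimes> (h1 \<otimes> P \<otimes> h2) \<otimes> inv h2'"
      using list_prod_eq_if_bal_act[OF H ys carrier bal] by (simp add: P_def)
    also have "\<dots> = h2 \<otimes> inv h2'"
      using carrier P by (simp add: m_assoc)
    finally have "inv (prefix_prod G ys i) \<otimes> (inv h1 \<otimes> h1') \<otimes> prefix_prod G ys i = h2 \<otimes> inv h2'"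
      by (simp add: P_def 3 prefix_prod_def)
    then show ?thesis
      using h subgroup.m_closed[OF H] subgroup.m_inv_closed[OF H] by simp
  qed
qed

lemma act_free_if_base:
  assumes H: "subgroup H G" and r: "\<And>i. i \<le> m \<Longrightarrow> r i \<in> carrier G" and "0 < m"
    and base: "is_base G ((\<lambda>i. r i <# H) ` {..m})"
  shows "act_free G H (map (\<lambda>i. inv (r i) \<otimes> r (Suc i)) [0..<m])"
  unfolding act_free_def
proof (intro ballI impI)
  define ys where "ys = map (\<lambda>i. inv (r i) \<otimes> r (Suc i)) [0..<m]"
  have ys: "ys \<noteq> []" "set ys \<subseteq> carrier G" "length ys = m"
    using \<open>0 < m\<close> r by (auto simp: ys_def)
  fix h1 h2 h1' h2' assume h: "h1 \<in> H" "h2 \<in> H" "h1' \<in> H" "h2' \<in> H"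
    and bal: "bal G H (act G h1 h2 ys) (act G h1' h2' ys)"
  note carrier = h[THEN subgroup.mem_carrier[OF H]]
  define u where "u = inv h1 \<otimes> h1'"
  have u: "u \<in> carrier G" using carrier by (simp add: u_def)
  have "(r 0 \<otimes> u \<otimes> inv (r 0)) <# C = C" if "C \<in> (\<lambda>i. r i <# H) ` {..m}" for C
  proof -
    from that obtain i where i: "i \<le> m" "C = r i <# H" by auto
    have "inv (r i) \<otimes> (r 0 \<otimes> u \<otimes> inv (r 0)) \<otimes> r i
        = inv (prefix_prod G ys i) \<otimes> u \<otimes> prefix_prod G ys i"
      using prefix_prod_telescope[of m r, OF r i(1)] r[OF i(1)] r[of 0] u
      by (simp add: ys_def m_assoc inv_mult_group)
    also have "\<dots> \<in> H"
      using conj_mem_if_bal_act[OF H ys(1,2) h bal] i(1) ys(3) by (simp add: u_def)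
    finally show ?thesis
      using l_coset_fixed[OF H r[OF i(1)]] r[of 0] u i(2) by simp
  qed
  then have "r 0 \<otimes> u \<otimes> inv (r 0) = \<one>"
    using base r[of 0] u unfolding is_base_def by simp
  then have "h1' = h1"
    using r[of 0] u carrier by (simp add: inv_solve_right' u_def inv_solve_left')
  moreover from this have "h2' = h2"
    using list_prod_eq_if_bal_act[OF H ys(1,2) carrier bal] carrier ys by (simp add: m_assoc)
  ultimately show "h1 = h1' \<and> h2 = h2'" by simp
qed

lemma two_le_length_if_base:
  assumes H: "subgroup H G" and "H \<noteq> {\<one>}"
    and ws: "set ws \<subseteq> left_cosets G H" and base: "is_base G (set ws)"
  shows "2 \<le> length ws"
proof (rule ccontr)
  assume "\<not> 2 \<le> length ws"
  then have "ws = [] \<or> (\<exists>C. ws = [C])"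
    by (cases ws; cases "tl ws") auto
  then obtain a where a: "a \<in> carrier G" "set ws \<subseteq> {a <# H}"
    using ws one_closed unfolding left_cosets_def by fastforce
  obtain h where h: "h \<in> H" "h \<noteq> \<one>"
    using \<open>H \<noteq> {\<one>}\<close> subgroup.one_closed[OF H] by blast
  then have hG: "h \<in> carrier G" using subgroup.mem_carrier[OF H] by blast
  have "inv a \<otimes> (a \<otimes> h \<otimes> inv a) \<otimes> a = h"
    using a(1) hG by (simp add: m_assoc)
  then have "(a \<otimes> h \<otimes> inv a) <# (a <# H) = a <# H"
    using l_coset_fixed[OF H a(1)] a(1) hG h(1) by simp
  with base a have "a \<otimes> h \<otimes> inv a = \<one>"
    unfolding is_base_def using hG by blast
  then show False
    using h(2) a(1) hG by (simp add: inv_solve_right')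
qed

lemma obtain_coset_representatives:
  assumes ws: "set ws \<subseteq> left_cosets G H" "length ws = Suc m"
  obtains r where "\<And>i. i \<le> m \<Longrightarrow> r i \<in> carrier G" "set ws = (\<lambda>i. r i <# H) ` {..m}"
proof -
  have "ws ! i \<in> left_cosets G H" if "i \<le> m" for i
    using ws(1) nth_mem[of i ws] that ws(2) by auto
  then have "\<forall>i. \<exists>a. i \<le> m \<longrightarrow> a \<in> carrier G \<and> ws ! i = a <# H"
    unfolding left_cosets_def by blast
  from choice[OF this] obtain r
    where r: "\<And>i. i \<le> m \<Longrightarrow> r i \<in> carrier G" "\<And>i. i \<le> m \<Longrightarrow> ws ! i = r i <# H"
    by blast
  have "set ws = (\<lambda>i. ws ! i) ` {..m}"
    using ws(2) by (auto simp: in_set_conv_nth less_Suc_eq_le)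
  also have "\<dots> = (\<lambda>i. r i <# H) ` {..m}"
    using r(2) by (intro image_cong) auto
  finally show thesis
    using r(1) that by blast
qed

lemma has_depth_if_base:
  assumes fin: "finite (carrier G)" and H: "subgroup H G" and "0 < m"
    and ws: "set ws \<subseteq> left_cosets G H" "length ws = Suc m" and base: "is_base G (set ws)"
  shows "has_depth G H (2 * m + 1)"
proof -
  obtain r where r: "\<And>i. i \<le> m \<Longrightarrow> r i \<in> carrier G" and "set ws = (\<lambda>i. r i <# H) ` {..m}"
    using obtain_coset_representatives[OF ws] by blast
  with base have "act_free G H (map (\<lambda>i. inv (r i) \<otimes> r (Suc i)) [0..<m])"
    using act_free_if_base[of H m r, OF H r \<open>0 < m\<close>] by simp
  moreover have "map (\<lambda>i. inv (r i) \<otimes> r (Suc i)) [0..<m] \<in> tuples G m"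
    using r by (auto simp: tuples_def)
  ultimately have "bimod_summand G H H H (tuples G (m + 1)) (tuples G m)"
    using bimod_summand_if_act_free[OF H fin] \<open>0 < m\<close> by simp
  then show ?thesis
    unfolding has_depth_def using \<open>0 < m\<close> by auto
qed

lemma has_depth_if_Q_less_1:
  assumes fin: "finite (carrier G)" and H: "subgroup H G" and "H \<noteq> {\<one>}" and "Q G H t < 1"
  shows "2 \<le> t \<and> has_depth G H (2 * t - 1)"
proof -
  obtain ws where ws: "set ws \<subseteq> left_cosets G H" "length ws = t" "is_base G (set ws)"
    using exists_base_if_Q_less_1[OF fin H \<open>Q G H t < 1\<close>] by blast
  moreover have "2 \<le> t"
    using two_le_length_if_base[OF H \<open>H \<noteq> {\<one>}\<close> ws(1,3)] ws(2) by simp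
  ultimately have "has_depth G H (2 * (t - 1) + 1)"
    using has_depth_if_base[OF fin H, of "t - 1" ws] by simp
  moreover have "2 * (t - 1) + 1 = 2 * t - 1"
    using \<open>2 \<le> t\<close> by simp
  ultimately show ?thesis
    using \<open>2 \<le> t\<close> by simp
qed

end

theorem proposition2p6:
  fixes G :: "('a, 'b) monoid_scheme" and H :: "'a set"
  assumes "group G" and "finite (carrier G)" and "subgroup H G"
    and "H \<noteq> {\<one>\<^bsub>G\<^esub>}" and "core_free G H"
  shows "(\<forall>t::nat. t > 0 \<longrightarrow> Q G H t < 1 \<longrightarrow> depth G H \<le> 2 * t - 1)
       \<and> (Q G H 2 < 1 \<longrightarrow> depth G H = 3)"
proof -
  interpret group G by fact
  note fin = assms(2) and H = assms(3) and nontrivial = assms(4)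
  have "depth G H \<le> 2 * t - 1" if "Q G H t < 1" for t
    unfolding depth_def using has_depth_if_Q_less_1[OF fin H nontrivial that]
    by (intro Least_le) simp
  moreover have "depth G H = 3" if "Q G H 2 < 1"
  proof -
    from not_normal_if_core_free[OF H nontrivial assms(5)]
    have "\<not> has_depth G H 1" "\<not> has_depth G H 2"
      using not_has_depth_1[OF fin H] not_has_depth_2[OF fin H] by blast+
    moreover have "has_depth G H 3"
      using has_depth_if_Q_less_1[OF fin H nontrivial that] by simp
    moreover have "3 \<le> d" if "has_depth G H d" "0 < d" for d
      using that calculation by (cases "d = 1 \<or> d = 2") auto
    ultimately show ?thesis
      unfolding depth_def by (intro Least_equality) auto
  qed
  ultimately show ?thesis by blast
qed

end
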